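(* Suppose Assumption (A2) holds and, in addition, $B$ is $\mu$-strongly monotone w.r.t. $S$ for some $\mu>0$ (i.e. $\langle Bx-By,x-y\rangle\ge\mu\|x-y\|_S^2$ for all $x,y$); let $x^*$ be the solution of $0\in Ax+Bx+Cx$. Let $p\in(0,1)$, $\lambda=1-p$, $L\ge\frac{3-p}{2}$, $\varepsilon_3>0$, $\alpha>0$, and suppose $L_k+\alpha\le\frac{1-\sqrt p}{4}$ for all $k$. Let $\bar L=\sup_kL_k$ and $\gamma=\min\{\frac{\sqrt p}{2\theta},\frac p\beta,\frac{\alpha}{\bar L\theta}\}$ (with $\frac{\alpha}{0}=+\infty$). For $k\ge1$ let $$c_k=\min\Big\{\frac{\gamma\mu}{1+\frac{L_k}{2L\varepsilon_3}},\ \frac{2L\big(1-p-L_{k-1}-\alpha-(1-p)(\alpha+L_k)\big)}{(1-p)L_k(\varepsilon_3+1)},\ \frac{Lp\big(1-\sqrt p-4(L_k+\alpha)\big)}{2(1-p)(4+p)+2pL_k(\varepsilon_3+1)}\Big\}$$ (the middle term read as $+\infty$ if $L_k=0$), and let $c$ be any real number with $0\le c\le c_k$ for all $k\ge1$. Then the sequences generated by Algorithm SVR-NFBHF-M (with this $\lambda,p,\gamma$) satisfy, for all $k\ge1$, $$(1-p-L_k)\,\mathbb E\|x_{k+1}-x^*\|_S^2\le\frac{\mathbb E\big[(1-p)\|x_1-x^*\|_S^2+\|\omega_1-x^*\|_S^2+d_1\big]}{(1+c/(2L))^k},$$ where $d_1=2\langle u_1,x_1-x^*\rangle+L_0\|y_0-\bar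 x_0\|_S^2$.
   Context: $\mathcal X$ is a separable real Hilbert space with Borel $\sigma$-algebra; all random variables live on a probability space $(\Omega,\mathcal F,P)$; $\mathbb E$ is (full) expectation. $\mathcal P(\mathcal X)$ is the set of bounded linear self-adjoint strongly positive operators $S$ ($\langle Sx,x\rangle\ge m\|x\|^2$, $m>0$); $\langle x,y\rangle_S=\langle Sx,y\rangle$, $\|x\|_S=\sqrt{\langle Sx,x\rangle}$. For $S\in\mathcal P(\mathcal X)$, $T$ is $L$-Lipschitz w.r.t. $S$ if $\|Tx-Ty\|_{S^{-1}}\le L\|x-y\|_S$, and $\beta^{-1}$-cocoercive w.r.t. $S$ if $\langle Tx-Ty,x-y\rangle\ge\beta^{-1}\|Tx-Ty\|_{S^{-1}}^2$. Assumption (A2): fix $S\in\mathcal P(\mathcal X)$. (i) $A:\mathcal X\to2^{\mathcal X}$ is maximally monotone; (ii) $B=\sum_{i=1}^NB_i$ where each $B_i:\mathcal X\to\mathcal X$ is monotone and Lipschitz; $Q$ is a probability distribution on $\{1,\dots,N\}$ and $B_\xi:\mathcal X\to\mathcal X$ ($\xi\in\{1,\dots,N\}$) are operators (stochastic oracle) with $\mathbb E_{\xi\sim Q}[B_\xi(x)]=B(x)$ for all $x$ and $\mathbb E_{\xi\sim Q}\|B_\xi u-B_\xi v\|_{S^{-1}}^2\le\theta^2\|u-v\|_S^2$ for all $u,v$, some $\theta>0$; (iii) $C:\mathcal X\to\mathcal X$ is $\beta^{-1}$-cocoercive w.r.t. $S$, $\beta>0$; (iv) the solution set $\Omega^*=\{x:0\in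 Ax+Bx+Cx\}$ is nonempty; (v) $\gamma>0$ and for each $k$, $M_k:\mathcal X\to\mathcal X$ is an operator such that $\gamma M_k-S$ is $L_k$-Lipschitz w.r.t. $S$ with $L_k\in[0,1)$ (so $(M_k+A)^{-1}$ is single-valued with full domain). Algorithm SVR-NFBHF-M: parameters $p\in(0,1]$, $\lambda\ge0$; initial $x_0,u_0\in\mathcal X$, $\omega_0=x_0$. For $k=0,1,\dots$: $\bar x_k=\lambda x_k+(1-\lambda)\omega_k$; $y_k=(M_k+A)^{-1}\big(M_k\bar x_k-(B+C)\omega_k+\gamma^{-1}u_k\big)$; $u_{k+1}=(\gamma M_k-S)y_k-(\gamma M_k-S)\bar x_k$; draw $\xi_k\sim Q$ independently of the past; $x_{k+1}=y_k-\gamma S^{-1}B_{\xi_k}y_k+\gamma S^{-1}B_{\xi_k}\omega_k$; $\omega_{k+1}=x_{k+1}$ with probability $p$ and $\omega_{k+1}=\omega_k$ with probability $1-p$ (independent coin). *)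

theory Defs
  imports "HOL-Analysis.Analysis" "HOL-Probability.Probability"
begin

text \<open>The dual norm
  with respect to S^{-1} is norm_S (inv S) x, where inv S is the inverse of the
  (bijective, since strongly positive bounded self-adjoint) operator S.\<close>
definition norm_S :: "('a::real_inner \<Rightarrow> 'a) \<Rightarrow> 'a \<Rightarrow> real" where
  "norm_S S x = sqrt (inner (S x) x)"

definition strongly_pos_sa :: "('a::real_inner \<Rightarrow> 'a) \<Rightarrow> bool" where
  "strongly_pos_sa S \<longleftrightarrow> bounded_linear S \<and> (\<forall>x y. inner (S x) y = inner x (S y))
     \<and> (\<exists>m>0. \<forall>x. inner (S x) x \<ge> m * (norm x)\<^sup>2)"

definition lipschitz_wrt :: "('a::real_inner \<Rightarrow> 'a) \<Rightarrow> real \<Rightarrow> ('a \<Rightarrow> 'a) \<Rightarrow> bool" where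
  "lipschitz_wrt S L T \<longleftrightarrow> (\<forall>x y. norm_S (inv S) (T x - T y) \<le> L * norm_S S (x - y))"

definition cocoercive_wrt :: "('a::real_inner \<Rightarrow> 'a) \<Rightarrow> real \<Rightarrow> ('a \<Rightarrow> 'a) \<Rightarrow> bool" where
  "cocoercive_wrt S \<beta> T \<longleftrightarrow>
     (\<forall>x y. inner (T x - T y) (x - y) \<ge> (1 / \<beta>) * (norm_S (inv S) (T x - T y))\<^sup>2)"

definition strongly_monotone_wrt :: "('a::real_inner \<Rightarrow> 'a) \<Rightarrow> real \<Rightarrow> ('a \<Rightarrow> 'a) \<Rightarrow> bool" where
  "strongly_monotone_wrt S \<mu> T \<longleftrightarrow>
     (\<forall>x y. inner (T x - T y) (x - y) \<ge> \<mu> * (norm_S S (x - y))\<^sup>2)"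

definition monotone_op :: "('a::real_inner \<Rightarrow> 'a) \<Rightarrow> bool" where
  "monotone_op T \<longleftrightarrow> (\<forall>x y. inner (T x - T y) (x - y) \<ge> 0)"

definition lipschitz_op :: "('a::real_normed_vector \<Rightarrow> 'a) \<Rightarrow> bool" where
  "lipschitz_op T \<longleftrightarrow> (\<exists>K. \<forall>x y. norm (T x - T y) \<le> K * norm (x - y))"

definition monotone_setop :: "('a::real_inner \<Rightarrow> 'a set) \<Rightarrow> bool" where
  "monotone_setop A \<longleftrightarrow> (\<forall>x y u v. u \<in> A x \<longrightarrow> v \<in> A y \<longrightarrow> inner (u - v) (x - y) \<ge> 0)"

definition maximal_monotone :: "('a::real_inner \<Rightarrow> 'a set) \<Rightarrow> bool" where
  "maximal_monotone A \<longleftrightarrow> monotone_setop A \<and>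
     (\<forall>x u. (\<forall>y v. v \<in> A y \<longrightarrow> inner (u - v) (x - y) \<ge> 0) \<longrightarrow> u \<in> A x)"

end

theory Submission
  imports Defs
begin

text \<open>
  Let \<open>\<Phi>\<^sub>k = (1 - p) \<parallel>x\<^sub>k - x\<^sup>*\<parallel>\<^sup>2 + \<parallel>\<omega>\<^sub>k - x\<^sup>*\<parallel>\<^sup>2 + 2 \<langle>u\<^sub>k, x\<^sub>k - x\<^sup>*\<rangle> + L\<^sub>k\<^sub>-\<^sub>1 \<parallel>y\<^sub>k\<^sub>-\<^sub>1 - xbar\<^sub>k\<^sub>-\<^sub>1\<parallel>\<^sup>2\<close>
  (norms in the metric \<open>S\<close>). Conditioned on the first \<open>k\<close>
  draws, monotonicity of \<open>A\<close> at the resolvent point \<open>y\<^sub>k\<close>, strong monotonicity of \<open>B\<close>,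
  cocoercivity of \<open>C\<close> and the variance bound of the oracle bound \<open>\<Phi>\<^sub>k\<close> minus the expectation
  of \<open>\<Phi>\<^sub>k\<^sub>+\<^sub>1\<close> from below by a quadratic form in the distances from \<open>y\<^sub>k\<close> to \<open>x\<^sup>*\<close>, \<open>x\<^sub>k\<close>,
  \<open>\<omega>\<^sub>k\<close> and \<open>xbar\<^sub>k\<close>. The conditions on \<open>c\<close> make this form dominate \<open>c / (2 L)\<close> times the
  expectation of \<open>\<Phi>\<^sub>k\<^sub>+\<^sub>1\<close>, so \<open>E \<Phi>\<^sub>k\<^sub>+\<^sub>1 \<le> E \<Phi>\<^sub>1 / (1 + c / (2 L))\<^sup>k\<close>; finally
  \<open>\<Phi>\<^sub>k\<^sub>+\<^sub>1 \<ge> (1 - p - L\<^sub>k) \<parallel>x\<^sub>k\<^sub>+\<^sub>1 - x\<^sup>*\<parallel>\<^sup>2\<close> by Cauchy-Schwarz and Young.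
  Since the draws take finitely many values, the iterates are functions of the history of draws
  and every expectation is a finite sum over histories, which makes the conditioning elementary.
\<close>

section \<open>Strongly positive operators\<close>

locale strongly_positive =
  fixes S :: "'a::{real_inner, complete_space} \<Rightarrow> 'a"
  assumes strongly_pos: "strongly_pos_sa S"
begin

lemma bounded_linear_S: "bounded_linear S"
  using strongly_pos unfolding strongly_pos_sa_def by blast

lemma linear_S: "linear S"
  using bounded_linear_S bounded_linear.linear by blast

lemma S_self_adjoint: "inner (S x) y = inner x (S y)"
  using strongly_pos unfolding strongly_pos_sa_def by blast

lemma S_diff: "S (a - b) = S a - S b"
  using linear_S by (simp add: linear_diff)

lemma S_add: "S (a + b) = S a + S b"
  using linear_S by (simp add: linear_add)

lemma S_scaleR: "S (c *\<^sub>R a) = c *\<^sub>R S a"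
  using linear_S by (simp add: linear_scale)

lemma S_coercive_bounded:
  obtains m K where "0 < m" "m \<le> K" "\<And>x. m * (norm x)\<^sup>2 \<le> inner (S x) x"
    "\<And>x. norm (S x) \<le> K * norm x"
proof -
  obtain m where m: "m > 0" "\<And>x. m * (norm x)\<^sup>2 \<le> inner (S x) x"
    using strongly_pos unfolding strongly_pos_sa_def by blast
  obtain K0 where K0: "\<And>x. norm (S x) \<le> norm x * K0"
    using bounded_linear_S bounded_linear.bounded by blast
  have "norm (S x) \<le> max K0 m * norm x" for x
    using K0[of x] mult_left_mono[of K0 "max K0 m" "norm x"] by (simp add: mult.commute)
  with m show thesis by (intro that[of m "max K0 m"]) auto
qed

lemma quad_nonneg: "0 \<le> inner (S x) x"
  by (metis S_coercive_bounded order_trans mult_nonneg_nonneg less_imp_le zero_le_power2)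

lemma quad_eq_0D: "inner (S x) x = 0 \<Longrightarrow> x = 0"
proof -
  assume "inner (S x) x = 0"
  moreover obtain m where "0 < m" "m * (norm x)\<^sup>2 \<le> inner (S x) x"
    using S_coercive_bounded by metis
  ultimately show "x = 0" by (simp add: mult_le_0_iff)
qed

lemma inj_S: "inj S"
proof (rule injI)
  fix x y assume "S x = S y"
  then have "inner (S (x - y)) (x - y) = 0" by (simp add: S_diff)
  then show "x = y" using quad_eq_0D by fastforce
qed

text \<open>Surjectivity comes from Banach's fixed point theorem: for \<open>t = m / K\<^sup>2\<close> the map
  \<open>x \<mapsto> x - t (S x - z)\<close> is a contraction with constant \<open>sqrt (1 - m\<^sup>2 / K\<^sup>2)\<close>.\<close>
lemma surj_S: "surj S"
proof -
  obtain m K where m: "0 < m" "m \<le> K" "\<And>x. m * (norm x)\<^sup>2 \<le> inner (S x) x"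
    and K: "\<And>x. norm (S x) \<le> K * norm x"
    using S_coercive_bounded by blast
  define t where "t = m / K\<^sup>2"
  define c where "c = sqrt (1 - m\<^sup>2 / K\<^sup>2)"
  have t: "t > 0" unfolding t_def using m by simp
  have mK: "m\<^sup>2 / K\<^sup>2 \<le> 1" using m by (simp add: power_mono)
  have c: "0 \<le> c" "c < 1" unfolding c_def using m mK by (auto simp: real_sqrt_lt_1_iff)
  have contraction: "norm (d - t *\<^sub>R S d) \<le> c * norm d" for d
  proof -
    have "(norm (d - t *\<^sub>R S d))\<^sup>2 = (norm d)\<^sup>2 - 2 * t * inner (S d) d + t\<^sup>2 * (norm (S d))\<^sup>2"
      unfolding power2_norm_eq_inner
      by (simp add: inner_diff_left inner_diff_right inner_commute algebra_simps power2_eq_square)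
    also have "\<dots> \<le> (norm d)\<^sup>2 - 2 * t * (m * (norm d)\<^sup>2) + t\<^sup>2 * (K * norm d)\<^sup>2"
      using m(3)[of d] K[of d] t by (intro add_mono diff_mono mult_left_mono power_mono) auto
    also have "\<dots> = (c * norm d)\<^sup>2"
      unfolding t_def c_def using m mK by (simp add: field_simps power2_eq_square)
    finally show ?thesis using c by (simp add: power2_le_iff_abs_le)
  qed
  show ?thesis unfolding surj_def
  proof
    fix z
    define f where "f x = x - t *\<^sub>R (S x - z)" for x
    have "dist (f x) (f y) \<le> c * dist x y" for x y
      using contraction[of "x - y"] unfolding f_def dist_norm by (simp add: S_diff algebra_simps)
    then obtain x where "f x = x" using banach_fix_type[OF c] by blast
    then have "S x = z" unfolding f_def using t by simp
    then show "\<exists>x. z = S x" by auto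
  qed
qed

lemma S_inv_S [simp]: "S (inv S v) = v"
  using surj_S by (simp add: surj_f_inv_f)

lemma inv_S_diff: "inv S (a - b) = inv S a - inv S b"
  using inj_S by (rule injD) (simp add: S_diff)

lemma inner_S_inv_S: "inner (S a) (inv S g) = inner a g"
  by (simp add: S_self_adjoint)

lemma quad_add: "inner (S (a + b)) (a + b) = inner (S a) a + 2 * inner (S a) b + inner (S b) b"
  using S_self_adjoint[of b a] by (simp add: S_add inner_add_left inner_add_right inner_commute)

lemma quad_diff: "inner (S (a - b)) (a - b) = inner (S a) a - 2 * inner (S a) b + inner (S b) b"
  using S_self_adjoint[of b a] by (simp add: S_diff inner_diff_left inner_diff_right inner_commute)

lemma quad_scaleR: "inner (S (c *\<^sub>R a)) (c *\<^sub>R a) = c\<^sup>2 * inner (S a) a"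
  by (simp add: S_scaleR power2_eq_square)

lemma quad_convex_comb:
  "inner (S ((1 - t) *\<^sub>R a + t *\<^sub>R b)) ((1 - t) *\<^sub>R a + t *\<^sub>R b)
   = (1 - t) * inner (S a) a + t * inner (S b) b - t * (1 - t) * inner (S (a - b)) (a - b)"
proof -
  have "inner (S ((1 - t) *\<^sub>R a + t *\<^sub>R b)) ((1 - t) *\<^sub>R a + t *\<^sub>R b)
     = (1 - t)\<^sup>2 * inner (S a) a + 2 * ((1 - t) * t * inner (S a) b) + t\<^sup>2 * inner (S b) b"
    unfolding quad_add quad_scaleR by (simp add: S_scaleR)
  then show ?thesis unfolding quad_diff by (simp add: power2_eq_square algebra_simps)
qed

lemma norm_S_nonneg: "0 \<le> norm_S S a"
  unfolding norm_S_def by (rule real_sqrt_ge_zero[OF quad_nonneg])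

lemma norm_S_squared: "(norm_S S a)\<^sup>2 = inner (S a) a"
  unfolding norm_S_def by (rule real_sqrt_pow2[OF quad_nonneg])

lemma dual_norm_eq: "norm_S (inv S) v = norm_S S (inv S v)"
  unfolding norm_S_def by (simp add: inner_commute)

lemma dual_norm_nonneg: "0 \<le> norm_S (inv S) v"
  unfolding dual_norm_eq by (rule norm_S_nonneg)

lemma S_Cauchy_Schwarz: "\<bar>inner (S a) b\<bar> \<le> norm_S S a * norm_S S b"
proof (cases "b = 0")
  case True then show ?thesis by (simp add: linear_S linear_0 norm_S_nonneg)
next
  case False
  then have pos: "inner (S b) b > 0" using quad_nonneg quad_eq_0D by (metis order_le_less)
  define t where "t = inner (S a) b / inner (S b) b"
  have "0 \<le> inner (S (a - t *\<^sub>R b)) (a - t *\<^sub>R b)" by (rule quad_nonneg)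
  also have "\<dots> = inner (S a) a - (inner (S a) b)\<^sup>2 / inner (S b) b"
    unfolding quad_diff quad_scaleR t_def using pos
    by (simp add: S_scaleR field_simps power2_eq_square del: inner_commute)
  finally have "(inner (S a) b)\<^sup>2 \<le> (norm_S S a * norm_S S b)\<^sup>2"
    using pos by (simp add: field_simps power_mult_distrib norm_S_squared)
  then show ?thesis
    using norm_S_nonneg[of a] norm_S_nonneg[of b] by (simp add: power2_le_iff_abs_le)
qed

lemma dual_Cauchy_Schwarz: "\<bar>inner v b\<bar> \<le> norm_S (inv S) v * norm_S S b"
  using S_Cauchy_Schwarz[of "inv S v" b] by (simp add: dual_norm_eq)

lemma dual_dual_Cauchy_Schwarz: "\<bar>inner u (inv S g)\<bar> \<le> norm_S (inv S) u * norm_S (inv S) g"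
  using S_Cauchy_Schwarz[of "inv S u" "inv S g"] by (simp add: dual_norm_eq)

lemma inner_le_dual_norm: "inner v b \<le> norm_S (inv S) v * norm_S S b"
  using dual_Cauchy_Schwarz abs_le_D1 by blast

lemma inner_ge_neg_dual_norm: "- (norm_S (inv S) v * norm_S S b) \<le> inner v b"
  using dual_Cauchy_Schwarz by (meson abs_le_D2 minus_le_iff)

lemma norm_S_triangle: "norm_S S (a + b) \<le> norm_S S a + norm_S S b"
proof -
  have "(norm_S S (a + b))\<^sup>2 \<le> (norm_S S a + norm_S S b)\<^sup>2"
    using S_Cauchy_Schwarz[of a b] by (simp add: norm_S_squared quad_add power2_sum)
  then show ?thesis using norm_S_nonneg by (meson add_nonneg_nonneg power2_le_imp_le)
qed

lemma norm_S_scaleR: "norm_S S (c *\<^sub>R a) = \<bar>c\<bar> * norm_S S a"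
  unfolding norm_S_def by (simp add: S_scaleR real_sqrt_mult)

lemma norm_S_minus_commute: "norm_S S (a - b) = norm_S S (b - a)"
  using norm_S_scaleR[of "-1" "a - b"] by simp

lemma norm_S_triangle_diff: "norm_S S (a - c) \<le> norm_S S (a - b) + norm_S S (b - c)"
  using norm_S_triangle[of "a - b" "b - c"] by simp

end

section \<open>Elementary real inequalities\<close>

lemma two_mult_le_weighted_squares:
  fixes a b e :: real
  assumes "0 < e"
  shows "2 * a * b \<le> e * a\<^sup>2 + b\<^sup>2 / e"
proof -
  have "0 \<le> (e * a - b)\<^sup>2 / e" using assms by simp
  also have "\<dots> = e * a\<^sup>2 + b\<^sup>2 / e - 2 * a * b"
    using assms by (simp add: power2_eq_square field_simps)
  finally show ?thesis by simp
qed

lemma weighted_mean_le_of_mean_square_le: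
  fixes w z :: "'i \<Rightarrow> real"
  assumes "finite I" "\<And>i. i \<in> I \<Longrightarrow> 0 \<le> w i" "(\<Sum>i\<in>I. w i) = 1"
    and "\<And>i. i \<in> I \<Longrightarrow> 0 \<le> z i" "(\<Sum>i\<in>I. w i * (z i)\<^sup>2) \<le> c\<^sup>2" "0 \<le> c"
  shows "(\<Sum>i\<in>I. w i * z i) \<le> c"
proof -
  have "(\<Sum>i\<in>I. sqrt (w i) * (sqrt (w i) * z i))\<^sup>2
      \<le> (\<Sum>i\<in>I. (sqrt (w i))\<^sup>2) * (\<Sum>i\<in>I. (sqrt (w i) * z i)\<^sup>2)"
    by (rule Cauchy_Schwarz_ineq_sum)
  also have "(\<Sum>i\<in>I. sqrt (w i) * (sqrt (w i) * z i)) = (\<Sum>i\<in>I. w i * z i)"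
    using assms(2) by (intro sum.cong) (auto simp: mult.assoc[symmetric])
  also have "(\<Sum>i\<in>I. (sqrt (w i))\<^sup>2) = 1" using assms(2,3) by simp
  also have "(\<Sum>i\<in>I. (sqrt (w i) * z i)\<^sup>2) = (\<Sum>i\<in>I. w i * (z i)\<^sup>2)"
    using assms(2) by (intro sum.cong) (auto simp: power_mult_distrib)
  finally have "(\<Sum>i\<in>I. w i * z i)\<^sup>2 \<le> c\<^sup>2" using assms(5) by simp
  moreover have "0 \<le> (\<Sum>i\<in>I. w i * z i)" using assms(2,4) by (intro sum_nonneg) auto
  ultimately show ?thesis using assms(6) by (meson power2_le_imp_le)
qed

lemma margin_parameter_bounds:
  fixes p q r Lc eps :: real
  assumes q: "0 < q" "q < 1" "p = q\<^sup>2" and r: "0 \<le> r" and Lc: "0 \<le> Lc" and eps: "0 < eps"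
    and margin: "4 * r * ((1 - p) * (4 + p) + p * Lc * (eps + 1)) + 4 * p * Lc \<le> p * (1 - q)"
  defines "lam \<equiv> Lc * (1 + r * (1 + eps))"
  shows "lam \<le> (1 - q) / 4"
    and "lam * (2 * p\<^sup>2 + p / 2 + p * q) \<le> p / 4 - 3 * r * p / 8 - 3 / 2 * r * (1 - p)"
proof -
  define rho where "rho = r * (1 - p) * (4 + p)"
  have p: "0 < p" "p < 1" using q by (auto simp: power_less_one_iff)
  have rho0: "0 \<le> rho" unfolding rho_def using r p by simp
  have lam0: "0 \<le> lam" unfolding lam_def using Lc r eps by simp
  have margin': "4 * rho + 4 * (p * lam) \<le> p * (1 - q)"
    using margin unfolding rho_def lam_def by (simp add: algebra_simps)
  show lam_le: "lam \<le> (1 - q) / 4"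
  proof -
    have "p * (4 * lam) \<le> p * (1 - q)" using margin' rho0 by simp
    then show ?thesis using p by (simp add: mult_le_cancel_left_pos)
  qed
  have r16: "r * p \<le> p / 16"
  proof -
    have "0 \<le> p * lam" using p lam0 by simp
    then have "4 * rho \<le> p * (1 - q)" using margin' by linarith
    moreover have "rho = ((1 + q) * (4 + p) * r) * (1 - q)"
      unfolding rho_def q(3) by (simp add: algebra_simps power2_eq_square)
    ultimately have "4 * ((1 + q) * (4 + p) * r) * (1 - q) \<le> p * (1 - q)" by simp
    then have "4 * ((1 + q) * (4 + p) * r) \<le> p" using q by (simp add: mult_le_cancel_right_pos)
    moreover have "4 * r \<le> ((1 + q) * (4 + p)) * r"
      using q p r by (intro mult_right_mono) (auto simp: algebra_simps)
    ultimately show ?thesis using p by (simp add: mult_right_mono)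
  qed
  have "(1 - q) * (2 * q\<^sup>2 + q + 1 / 2) \<le> 3 / 4"
  proof -
    have "3 / 4 - (1 - q) * (2 * q\<^sup>2 + q + 1 / 2) = (q - 1 / 2)\<^sup>2 * (2 * q + 1)"
      by (simp add: power2_eq_square field_simps)
    moreover have "0 \<le> (q - 1 / 2)\<^sup>2 * (2 * q + 1)" using q by simp
    ultimately show ?thesis by linarith
  qed
  then have "p * ((1 - q) * (2 * q\<^sup>2 + q + 1 / 2) / 4) \<le> p * (3 / 16)"
    using p by (intro mult_left_mono) auto
  moreover have "p * ((1 - q) / 4 * (2 * q\<^sup>2 + q + 1 / 8)) + 3 / 32 * (p * (1 - q))
      = p * ((1 - q) * (2 * q\<^sup>2 + q + 1 / 2) / 4)"
    by (simp add: field_simps)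
  moreover have "p * (lam * (2 * q\<^sup>2 + q + 1 / 8)) \<le> p * ((1 - q) / 4 * (2 * q\<^sup>2 + q + 1 / 8))"
    using lam_le p q by (intro mult_left_mono mult_right_mono) auto
  moreover have "3 / 2 * (r * (1 - p)) \<le> 3 / 8 * rho"
  proof -
    have "(r * (1 - p)) * 4 \<le> (r * (1 - p)) * (4 + p)" using r p by (intro mult_left_mono) auto
    moreover have "rho = (r * (1 - p)) * (4 + p)" unfolding rho_def by simp
    ultimately show ?thesis by linarith
  qed
  moreover have "lam * (2 * p\<^sup>2 + p / 2 + p * q) = p * (lam * (2 * q\<^sup>2 + q + 1 / 8)) + 3 / 8 * (p * lam)"
    using q(3) by (simp add: algebra_simps power2_eq_square)
  moreover have "p / 4 - 3 * r * p / 8 - 3 / 2 * r * (1 - p) = p / 4 - 3 / 8 * (r * p) - 3 / 2 * (r * (1 - p))"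
    by simp
  ultimately show "lam * (2 * p\<^sup>2 + p / 2 + p * q) \<le> p / 4 - 3 * r * p / 8 - 3 / 2 * r * (1 - p)"
    using margin' r16 rho0 p by linarith
qed

text \<open>In the application \<open>Y, A, W, V\<close> are the distances from \<open>y\<^sub>k\<close> to \<open>x\<^sup>*\<close>, \<open>xbar\<^sub>k\<close>,
  \<open>\<omega>\<^sub>k\<close>, \<open>x\<^sub>k\<close>, and \<open>g, gb, gm\<close> are \<open>\<gamma> \<theta>, \<gamma> \<beta>, \<gamma> \<mu>\<close>; the left-hand side is \<open>r\<close> times a
  bound for the next Lyapunov value and the right-hand side is the decrease guaranteed by one step.\<close>
lemma lyapunov_margin_dominates:
  fixes p q r Lc Lp eps g gb gm Y A W V :: real
  assumes q: "0 < q" "q < 1" "p = q\<^sup>2"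
    and r: "0 \<le> r" and Lc: "0 \<le> Lc" and Lp: "0 \<le> Lp" "Lp \<le> (1 - q) / 4" and eps: "0 < eps"
    and g: "0 \<le> g" "g \<le> q / 2" and gb: "0 \<le> gb" "gb \<le> p"
    and gm: "r * (6 - 2 * p) + 2 * r * Lc / eps \<le> 2 * gm"
    and margin: "4 * r * ((1 - p) * (4 + p) + p * Lc * (eps + 1)) + 4 * p * Lc \<le> p * (1 - q)"
    and nonneg: "0 \<le> Y" "0 \<le> A" "0 \<le> W"
    and V: "(A - p * W)\<^sup>2 \<le> (1 - p)\<^sup>2 * V\<^sup>2"
  shows "r * (Y\<^sup>2 + 2 * g * W * Y + g\<^sup>2 * W\<^sup>2 + 2 * Lc * A * Y + 2 * g * Lc * A * W
             + (1 - p) * (Y + W)\<^sup>2 + Lc * A\<^sup>2)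
         \<le> 2 * gm * Y\<^sup>2 + (1 - p - Lp) * V\<^sup>2 + p * W\<^sup>2 - Lc * A\<^sup>2 - (gb / 2 + g\<^sup>2) * W\<^sup>2
           - 2 * g * Lc * A * W"
proof -
  have p: "0 < p" "p < 1" using q by (auto simp: power_less_one_iff)
  define lam where "lam = Lc * (1 + r * (1 + eps))"
  define K where "K = Lc / eps"
  have lam: "lam \<le> (1 - q) / 4"
    "lam * (2 * p\<^sup>2 + p / 2 + p * q) \<le> p / 4 - 3 * r * p / 8 - 3 / 2 * r * (1 - p)"
    using margin_parameter_bounds[OF q r Lc eps margin] unfolding lam_def by auto
  have lam0: "0 \<le> lam" unfolding lam_def using Lc r eps by simp
  have "g\<^sup>2 \<le> (q / 2)\<^sup>2" using g by (intro power_mono) auto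
  then have g2: "g\<^sup>2 \<le> p / 4" using q(3) by (simp add: power_divide)
  define s1 where "s1 = r * (2 * Y\<^sup>2 + g\<^sup>2 * W\<^sup>2 / 2 - 2 * g * W * Y)"
  define s2 where "s2 = r * (Lc * eps * A\<^sup>2 + K * Y\<^sup>2 - 2 * Lc * A * Y)"
  define s3 where "s3 = r * (1 - p) * (3 * Y\<^sup>2 + 3 / 2 * W\<^sup>2 - (Y + W)\<^sup>2)"
  define s4 where "s4 = (2 * gm - r * (6 - 3 * p) - r * K) * Y\<^sup>2"
  define s5 where "s5 = (1 - p - Lp) * V\<^sup>2 - 3 / 4 * (A - p * W)\<^sup>2"
  define s6 where "s6 = (3 * p / 4 - gb / 2 - g\<^sup>2) * W\<^sup>2 + 3 / 2 * r * (p / 4 - g\<^sup>2) * W\<^sup>2"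
  define s7 where "s7 = (lam * q - 2 * (1 + r) * g * Lc) * A * W"
  define s8 where "s8 = lam * (2 * (A - p * W)\<^sup>2 + 2 * p\<^sup>2 * W\<^sup>2 - A\<^sup>2)"
  define s9 where "s9 = lam * ((A - p * W)\<^sup>2 / 2 + p / 2 * W\<^sup>2 + p * q * W\<^sup>2 - q * A * W)"
  define s10 where "s10 = (3 / 4 - 2 * lam - lam / 2) * (A - p * W)\<^sup>2
    + (p / 4 - 3 * r * p / 8 - 3 / 2 * r * (1 - p) - lam * (2 * p\<^sup>2 + p / 2 + p * q)) * W\<^sup>2"
  have "0 \<le> s1" unfolding s1_def
    using r two_mult_le_weighted_squares[of "1 / 2" "g * W" Y] by (simp add: power_mult_distrib)
  moreover have "0 \<le> s2"
  proof -
    have "Lc * (2 * A * Y) \<le> Lc * (eps * A\<^sup>2 + Y\<^sup>2 / eps)"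
      using two_mult_le_weighted_squares[OF eps, of A Y] Lc by (rule mult_left_mono)
    then have "0 \<le> r * (Lc * (eps * A\<^sup>2 + Y\<^sup>2 / eps) - Lc * (2 * A * Y))" using r by simp
    also have "\<dots> = s2" unfolding s2_def K_def using eps by (simp add: field_simps)
    finally show ?thesis .
  qed
  moreover have "0 \<le> s3" unfolding s3_def
    using r p two_mult_le_weighted_squares[of 2 Y W] by (simp add: power2_sum)
  moreover have "0 \<le> s4"
  proof -
    have "0 \<le> r * K" "0 \<le> r * p" unfolding K_def using r Lc eps p by auto
    moreover have "2 * r * Lc / eps = 2 * (r * K)" unfolding K_def by simp
    ultimately have "r * (6 - 3 * p) + r * K \<le> 2 * gm" using gm by (simp add: algebra_simps)
    then show ?thesis unfolding s4_def by simp
  qed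
  moreover have "0 \<le> s5" unfolding s5_def
  proof -
    have "1 - q \<le> 1 - p" using q by (simp add: power2_eq_square mult_left_le_one_le)
    then have "3 / 4 * (1 - p) \<le> 1 - p - Lp" using Lp by (simp add: field_simps)
    moreover have "(1 - p)\<^sup>2 \<le> 1 - p" using p by (simp add: power2_eq_square mult_left_le_one_le)
    ultimately have "3 / 4 * (1 - p)\<^sup>2 * V\<^sup>2 \<le> (1 - p - Lp) * V\<^sup>2"
      by (intro mult_right_mono) auto
    then show "0 \<le> (1 - p - Lp) * V\<^sup>2 - 3 / 4 * (A - p * W)\<^sup>2" using V by linarith
  qed
  moreover have "0 \<le> s6" unfolding s6_def using g2 gb r by simp
  moreover have "0 \<le> s7" unfolding s7_def
  proof -
    have "(1 + r) * Lc \<le> lam" unfolding lam_def using Lc r eps by (simp add: algebra_simps)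
    then have "((1 + r) * Lc) * (2 * g) \<le> lam * q" using g Lc r lam0 by (intro mult_mono) auto
    then have "0 \<le> lam * q - 2 * (1 + r) * g * Lc" by (simp add: algebra_simps)
    then show "0 \<le> (lam * q - 2 * (1 + r) * g * Lc) * A * W" using nonneg by simp
  qed
  moreover have "0 \<le> s8"
  proof -
    have "0 \<le> 2 * (A - p * W)\<^sup>2 + 2 * p\<^sup>2 * W\<^sup>2 - A\<^sup>2"
      using two_mult_le_weighted_squares[of 1 "A - p * W" "p * W"]
      by (simp add: power2_eq_square algebra_simps)
    then show ?thesis unfolding s8_def using lam0 by simp
  qed
  moreover have "0 \<le> s9"
  proof -
    have "0 \<le> (A - p * W)\<^sup>2 / 2 + p / 2 * W\<^sup>2 + p * q * W\<^sup>2 - q * A * W"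
      using two_mult_le_weighted_squares[of 1 "A - p * W" "q * W"] unfolding q(3)
      by (simp add: power2_eq_square field_simps)
    then show ?thesis unfolding s9_def using lam0 by simp
  qed
  moreover have "0 \<le> s10" unfolding s10_def using lam q by simp
  moreover have "2 * gm * Y\<^sup>2 + (1 - p - Lp) * V\<^sup>2 + p * W\<^sup>2 - Lc * A\<^sup>2 - (gb / 2 + g\<^sup>2) * W\<^sup>2
      - 2 * g * Lc * A * W
    - r * (Y\<^sup>2 + 2 * g * W * Y + g\<^sup>2 * W\<^sup>2 + 2 * Lc * A * Y + 2 * g * Lc * A * W
      + (1 - p) * (Y + W)\<^sup>2 + Lc * A\<^sup>2)
    = s1 + s2 + s3 + s4 + s5 + s6 + s7 + s8 + s9 + s10"
    unfolding s1_def s2_def s3_def s4_def s5_def s6_def s7_def s8_def s9_def s10_def lam_def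
    by (simp add: algebra_simps)
  ultimately show ?thesis by linarith
qed

section \<open>One step of the method\<close>

context strongly_positive
begin

lemma norm_S_dual_step_expansion:
  "(norm_S S (a - t *\<^sub>R inv S g))\<^sup>2 + 2 * inner v (a - t *\<^sub>R inv S g)
   = (norm_S S a)\<^sup>2 + 2 * inner v a - 2 * t * inner g a + t\<^sup>2 * (norm_S (inv S) g)\<^sup>2
     - 2 * t * inner v (inv S g)"
proof -
  have "(norm_S S (a - t *\<^sub>R inv S g))\<^sup>2
      = (norm_S S a)\<^sup>2 - 2 * inner (S a) (t *\<^sub>R inv S g) + t\<^sup>2 * inner (S (inv S g)) (inv S g)"
    unfolding norm_S_squared quad_diff quad_scaleR ..
  also have "inner (S a) (t *\<^sub>R inv S g) = t * inner g a"
    by (simp add: inner_S_inv_S inner_commute)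
  also have "inner (S (inv S g)) (inv S g) = (norm_S (inv S) g)\<^sup>2"
    by (simp add: dual_norm_eq norm_S_squared)
  finally show ?thesis by (simp add: inner_diff_right algebra_simps)
qed

lemma expected_oracle_step:
  fixes Q :: "'i pmf" and Bxi :: "'i \<Rightarrow> 'a \<Rightarrow> 'a" and xn :: "'i \<Rightarrow> 'a"
  assumes finite: "finite (set_pmf Q)"
    and unbiased: "B y - B om = (\<Sum>i\<in>set_pmf Q. pmf Q i *\<^sub>R (Bxi i y - Bxi i om))"
    and xn: "\<And>i. xn i = y - t *\<^sub>R inv S (Bxi i y) + t *\<^sub>R inv S (Bxi i om)"
  shows "(\<Sum>i\<in>set_pmf Q. pmf Q i * ((norm_S S (xn i - xstar))\<^sup>2 + 2 * inner v (xn i - xstar)))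
    = (norm_S S (y - xstar))\<^sup>2 + 2 * inner v (y - xstar) - 2 * t * inner (B y - B om) (y - xstar)
      + t\<^sup>2 * (\<Sum>i\<in>set_pmf Q. pmf Q i * (norm_S (inv S) (Bxi i y - Bxi i om))\<^sup>2)
      - 2 * t * (\<Sum>i\<in>set_pmf Q. pmf Q i * inner v (inv S (Bxi i y - Bxi i om)))"
proof -
  define g where "g i = Bxi i y - Bxi i om" for i
  define a where "a = (norm_S S (y - xstar))\<^sup>2 + 2 * inner v (y - xstar)"
  have pointwise: "(norm_S S (xn i - xstar))\<^sup>2 + 2 * inner v (xn i - xstar)
      = a - 2 * t * inner (g i) (y - xstar) + t\<^sup>2 * (norm_S (inv S) (g i))\<^sup>2
        - 2 * t * inner v (inv S (g i))" for i
  proof -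
    have xn_i: "xn i - xstar = (y - xstar) - t *\<^sub>R inv S (g i)"
      unfolding xn g_def by (simp add: inv_S_diff algebra_simps)
    show ?thesis unfolding xn_i a_def by (rule norm_S_dual_step_expansion)
  qed
  have "(\<Sum>i\<in>set_pmf Q. pmf Q i * ((norm_S S (xn i - xstar))\<^sup>2 + 2 * inner v (xn i - xstar)))
    = (\<Sum>i\<in>set_pmf Q. pmf Q i * a - 2 * t * (pmf Q i * inner (g i) (y - xstar))
        + t\<^sup>2 * (pmf Q i * (norm_S (inv S) (g i))\<^sup>2) - 2 * t * (pmf Q i * inner v (inv S (g i))))"
    unfolding pointwise by (simp add: algebra_simps)
  also have "\<dots> = (\<Sum>i\<in>set_pmf Q. pmf Q i) * a
      - 2 * t * (\<Sum>i\<in>set_pmf Q. pmf Q i * inner (g i) (y - xstar))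
      + t\<^sup>2 * (\<Sum>i\<in>set_pmf Q. pmf Q i * (norm_S (inv S) (g i))\<^sup>2)
      - 2 * t * (\<Sum>i\<in>set_pmf Q. pmf Q i * inner v (inv S (g i)))"
    by (simp add: sum.distrib sum_subtractf sum_distrib_left sum_distrib_right)
  also have "(\<Sum>i\<in>set_pmf Q. pmf Q i * inner (g i) (y - xstar)) = inner (B y - B om) (y - xstar)"
    unfolding unbiased g_def by (simp add: inner_sum_left)
  also have "(\<Sum>i\<in>set_pmf Q. pmf Q i) = 1" using finite by (simp add: sum_pmf_eq_1)
  finally show ?thesis unfolding a_def g_def by simp
qed

lemma convex_comb_three_point:
  assumes "xb = (1 - p) *\<^sub>R x + p *\<^sub>R om"
  shows "2 * inner (S (xb - y)) (y - z)
    = (1 - p) * (norm_S S (x - z))\<^sup>2 + p * (norm_S S (om - z))\<^sup>2 - (norm_S S (y - z))\<^sup>2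
      - (1 - p) * (norm_S S (y - x))\<^sup>2 - p * (norm_S S (y - om))\<^sup>2"
proof -
  have xb_z: "xb - z = (1 - p) *\<^sub>R (x - z) + p *\<^sub>R (om - z)"
    and y_xb: "y - xb = (1 - p) *\<^sub>R (y - x) + p *\<^sub>R (y - om)"
    unfolding assms by (simp_all add: algebra_simps)
  have "(norm_S S (xb - z))\<^sup>2 = (1 - p) * (norm_S S (x - z))\<^sup>2 + p * (norm_S S (om - z))\<^sup>2
      - p * (1 - p) * inner (S (x - om)) (x - om)"
    unfolding norm_S_squared xb_z quad_convex_comb by simp
  moreover have "(norm_S S (y - xb))\<^sup>2 = (1 - p) * (norm_S S (y - x))\<^sup>2 + p * (norm_S S (y - om))\<^sup>2
      - p * (1 - p) * inner (S (x - om)) (x - om)"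
    unfolding norm_S_squared y_xb quad_convex_comb
    by (simp add: S_diff inner_diff_left inner_diff_right)
  moreover have "(norm_S S (xb - z))\<^sup>2
      = (norm_S S (xb - y))\<^sup>2 + 2 * inner (S (xb - y)) (y - z) + (norm_S S (y - z))\<^sup>2"
    using quad_add[of "xb - y" "y - z"] by (simp add: norm_S_squared)
  moreover have "norm_S S (xb - y) = norm_S S (y - xb)" by (rule norm_S_minus_commute)
  ultimately show ?thesis by simp
qed

lemma convex_comb_distance_defect:
  assumes "xb = (1 - p) *\<^sub>R x + p *\<^sub>R om" "0 \<le> p" "p \<le> 1"
  shows "(norm_S S (y - xb) - p * norm_S S (y - om))\<^sup>2 \<le> (1 - p)\<^sup>2 * (norm_S S (y - x))\<^sup>2"
proof -
  have "y - xb = (1 - p) *\<^sub>R (y - x) + p *\<^sub>R (y - om)"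
    unfolding assms(1) by (simp add: algebra_simps)
  then have "norm_S S (y - xb) \<le> (1 - p) * norm_S S (y - x) + p * norm_S S (y - om)"
    using norm_S_triangle[of "(1 - p) *\<^sub>R (y - x)" "p *\<^sub>R (y - om)"] assms(2,3)
    by (simp add: norm_S_scaleR)
  moreover have "p *\<^sub>R (y - om) = (y - xb) + (1 - p) *\<^sub>R (x - y)"
    unfolding assms(1) by (simp add: algebra_simps)
  then have "norm_S S (p *\<^sub>R (y - om)) \<le> norm_S S (y - xb) + norm_S S ((1 - p) *\<^sub>R (x - y))"
    by (simp only: norm_S_triangle)
  then have "p * norm_S S (y - om) \<le> norm_S S (y - xb) + (1 - p) * norm_S S (y - x)"
    using assms(2,3) by (simp add: norm_S_scaleR norm_S_minus_commute[of x y])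
  ultimately have "\<bar>norm_S S (y - xb) - p * norm_S S (y - om)\<bar> \<le> (1 - p) * norm_S S (y - x)"
    by linarith
  then show ?thesis by (simp add: power_mult_distrib[symmetric] power2_le_iff_abs_le assms)
qed

lemma cocoercive_cross_bound:
  assumes "cocoercive_wrt S \<beta> C" "0 < \<beta>"
  shows "- inner (C a - C b) (c - b) \<le> \<beta> / 4 * (norm_S S (c - a))\<^sup>2"
proof -
  define n where "n = norm_S (inv S) (C a - C b)"
  have "1 / \<beta> * n\<^sup>2 \<le> inner (C a - C b) (a - b)"
    using assms(1) unfolding cocoercive_wrt_def n_def by blast
  moreover have "- (n * norm_S S (c - a)) \<le> inner (C a - C b) (c - a)"
    unfolding n_def by (rule inner_ge_neg_dual_norm)
  moreover have "2 * n * norm_S S (c - a) \<le> 2 / \<beta> * n\<^sup>2 + (norm_S S (c - a))\<^sup>2 / (2 / \<beta>)"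
    using assms(2) by (intro two_mult_le_weighted_squares) simp
  moreover have "inner (C a - C b) (c - b) = inner (C a - C b) (a - b) + inner (C a - C b) (c - a)"
    by (simp add: inner_diff_right)
  ultimately show ?thesis by (simp add: field_simps)
qed

lemma oracle_deviation_bounds:
  fixes Q :: "'i pmf" and Bxi :: "'i \<Rightarrow> 'a \<Rightarrow> 'a"
  assumes finite: "finite (set_pmf Q)"
    and unbiased: "B y - B om = (\<Sum>i\<in>set_pmf Q. pmf Q i *\<^sub>R (Bxi i y - Bxi i om))"
    and variance: "(\<Sum>i\<in>set_pmf Q. pmf Q i * (norm_S (inv S) (Bxi i y - Bxi i om))\<^sup>2)
      \<le> \<theta>\<^sup>2 * (norm_S S (y - om))\<^sup>2"
    and \<theta>: "0 \<le> \<theta>"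
  shows "- inner (B y - B om) w \<le> \<theta> * norm_S S (y - om) * norm_S S w"
    and "- (\<Sum>i\<in>set_pmf Q. pmf Q i * inner v (inv S (Bxi i y - Bxi i om)))
      \<le> \<theta> * norm_S S (y - om) * norm_S (inv S) v"
proof -
  define g where "g i = Bxi i y - Bxi i om" for i
  define Z where "Z = (\<Sum>i\<in>set_pmf Q. pmf Q i * norm_S (inv S) (g i))"
  have Z: "Z \<le> \<theta> * norm_S S (y - om)" unfolding Z_def
  proof (rule weighted_mean_le_of_mean_square_le[OF finite])
    show "(\<Sum>i\<in>set_pmf Q. pmf Q i * (norm_S (inv S) (g i))\<^sup>2) \<le> (\<theta> * norm_S S (y - om))\<^sup>2"
      using variance unfolding g_def by (simp add: power_mult_distrib)
  qed (simp_all add: finite sum_pmf_eq_1 dual_norm_nonneg norm_S_nonneg \<theta>)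
  have "- inner (B y - B om) w = (\<Sum>i\<in>set_pmf Q. pmf Q i * - inner (g i) w)"
    unfolding unbiased g_def by (simp add: inner_sum_left sum_negf)
  also have "\<dots> \<le> (\<Sum>i\<in>set_pmf Q. pmf Q i * (norm_S (inv S) (g i) * norm_S S w))"
  proof (intro sum_mono mult_left_mono)
    show "- inner (g i) w \<le> norm_S (inv S) (g i) * norm_S S w" for i
      using inner_ge_neg_dual_norm[of "g i" w] by linarith
  qed simp
  also have "\<dots> = Z * norm_S S w" unfolding Z_def by (simp add: sum_distrib_right mult.assoc)
  also have "\<dots> \<le> \<theta> * norm_S S (y - om) * norm_S S w"
    using Z norm_S_nonneg[of w] by (rule mult_right_mono)
  finally show "- inner (B y - B om) w \<le> \<theta> * norm_S S (y - om) * norm_S S w" .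
  have "- (\<Sum>i\<in>set_pmf Q. pmf Q i * inner v (inv S (g i)))
      = (\<Sum>i\<in>set_pmf Q. pmf Q i * - inner v (inv S (g i)))"
    by (simp add: sum_negf)
  also have "\<dots> \<le> (\<Sum>i\<in>set_pmf Q. pmf Q i * (norm_S (inv S) (g i) * norm_S (inv S) v))"
  proof (intro sum_mono mult_left_mono)
    show "- inner v (inv S (g i)) \<le> norm_S (inv S) (g i) * norm_S (inv S) v" for i
      using dual_dual_Cauchy_Schwarz[of v "g i"] by (simp add: abs_le_iff mult.commute)
  qed simp
  also have "\<dots> = Z * norm_S (inv S) v" unfolding Z_def by (simp add: sum_distrib_right mult.assoc)
  also have "\<dots> \<le> \<theta> * norm_S S (y - om) * norm_S (inv S) v"
    using Z dual_norm_nonneg[of v] by (rule mult_right_mono)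
  finally show "- (\<Sum>i\<in>set_pmf Q. pmf Q i * inner v (inv S (Bxi i y - Bxi i om)))
      \<le> \<theta> * norm_S S (y - om) * norm_S (inv S) v"
    unfolding g_def .
qed

lemma expected_oracle_step_le:
  fixes Q :: "'i pmf" and Bxi :: "'i \<Rightarrow> 'a \<Rightarrow> 'a" and xn :: "'i \<Rightarrow> 'a"
  assumes finite: "finite (set_pmf Q)"
    and unbiased: "B y - B om = (\<Sum>i\<in>set_pmf Q. pmf Q i *\<^sub>R (Bxi i y - Bxi i om))"
    and variance: "(\<Sum>i\<in>set_pmf Q. pmf Q i * (norm_S (inv S) (Bxi i y - Bxi i om))\<^sup>2)
      \<le> \<theta>\<^sup>2 * (norm_S S (y - om))\<^sup>2"
    and xn: "\<And>i. xn i = y - t *\<^sub>R inv S (Bxi i y) + t *\<^sub>R inv S (Bxi i om)"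
    and v: "norm_S (inv S) v \<le> a" and t: "0 < t" and \<theta>: "0 \<le> \<theta>"
  shows "(\<Sum>i\<in>set_pmf Q. pmf Q i * ((norm_S S (xn i - xstar))\<^sup>2 + 2 * inner v (xn i - xstar)))
    \<le> (norm_S S (y - xstar))\<^sup>2 - 2 * t * inner (B y - B om) (y - xstar)
      + (t * \<theta>)\<^sup>2 * (norm_S S (y - om))\<^sup>2 + 2 * inner v (y - xstar)
      + 2 * (t * \<theta>) * a * norm_S S (y - om)"
proof -
  define W where "W = norm_S S (y - om)"
  define SQ where "SQ = (\<Sum>i\<in>set_pmf Q. pmf Q i * (norm_S (inv S) (Bxi i y - Bxi i om))\<^sup>2)"
  define SU where "SU = (\<Sum>i\<in>set_pmf Q. pmf Q i * inner v (inv S (Bxi i y - Bxi i om)))"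
  have "t\<^sup>2 * SQ \<le> (t * \<theta>)\<^sup>2 * W\<^sup>2"
    using mult_left_mono[OF variance, of "t\<^sup>2"] unfolding SQ_def W_def
    by (simp add: power_mult_distrib)
  moreover have "- SU \<le> \<theta> * W * a"
  proof -
    have "- SU \<le> \<theta> * W * norm_S (inv S) v"
      using oracle_deviation_bounds(2)[OF finite unbiased variance \<theta>] unfolding SU_def W_def .
    also have "\<dots> \<le> \<theta> * W * a"
      using v \<theta> norm_S_nonneg unfolding W_def by (intro mult_left_mono) auto
    finally show ?thesis .
  qed
  from mult_left_mono[OF this less_imp_le[OF t]]
  have "- (t * SU) \<le> (t * \<theta>) * a * W" by (simp add: algebra_simps)
  ultimately show ?thesis
    unfolding expected_oracle_step[OF finite unbiased xn] SQ_def[symmetric] SU_def[symmetric]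
      W_def[symmetric]
    by linarith
qed

lemma resolvent_inclusion_inequality:
  fixes A :: "'a \<Rightarrow> 'a set" and B C M :: "'a \<Rightarrow> 'a"
  assumes A: "monotone_setop A"
    and xstar: "- (B xstar + C xstar) \<in> A xstar"
    and y: "(M xb - (B om + C om) + (1 / t) *\<^sub>R u) - M y \<in> A y"
    and u': "u' = (t *\<^sub>R M y - S y) - (t *\<^sub>R M xb - S xb)"
    and t: "0 < t"
  shows "0 \<le> inner (S (xb - y)) (y - xstar) - inner u' (y - xstar) + inner u (y - xstar)
    - t * inner (B om - B xstar) (y - xstar) - t * inner (C om - C xstar) (y - xstar)"
proof -
  define v where "v = (M xb - (B om + C om) + (1 / t) *\<^sub>R u) - M y - - (B xstar + C xstar)"
  have "0 \<le> inner v (y - xstar)"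
    using A xstar y unfolding monotone_setop_def v_def by blast
  then have "0 \<le> inner (t *\<^sub>R v) (y - xstar)" using t by simp
  also have "t *\<^sub>R v = S (xb - y) - u' + u - t *\<^sub>R (B om - B xstar) - t *\<^sub>R (C om - C xstar)"
    unfolding v_def u' using t by (simp add: S_diff algebra_simps)
  finally show ?thesis by (simp add: inner_diff_left inner_add_left)
qed

lemma resolvent_step_bound:
  fixes A :: "'a \<Rightarrow> 'a set" and B C M :: "'a \<Rightarrow> 'a"
  assumes A: "monotone_setop A"
    and xstar: "- (B xstar + C xstar) \<in> A xstar"
    and y: "(M xb - (B om + C om) + (1 / t) *\<^sub>R u) - M y \<in> A y"
    and xb: "xb = (1 - p) *\<^sub>R x + p *\<^sub>R om"
    and u': "u' = (t *\<^sub>R M y - S y) - (t *\<^sub>R M xb - S xb)"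
    and u: "norm_S (inv S) u \<le> Lp * U"
    and C: "cocoercive_wrt S \<beta> C" and B: "strongly_monotone_wrt S \<mu> B"
    and t: "0 < t" and \<beta>: "0 < \<beta>" and Lp: "0 \<le> Lp"
  shows "(norm_S S (y - xstar))\<^sup>2 - 2 * t * inner (B y - B om) (y - xstar) + 2 * inner u' (y - xstar)
      + (1 - p) * (norm_S S (om - xstar))\<^sup>2 + 2 * t * \<mu> * (norm_S S (y - xstar))\<^sup>2
      + (1 - p - Lp) * (norm_S S (y - x))\<^sup>2 + (p - t * \<beta> / 2) * (norm_S S (y - om))\<^sup>2
    \<le> (1 - p) * (norm_S S (x - xstar))\<^sup>2 + (norm_S S (om - xstar))\<^sup>2 + 2 * inner u (x - xstar)
      + Lp * U\<^sup>2"
proof -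
  define IS where "IS = inner (S (xb - y)) (y - xstar)"
  define IU' where "IU' = inner u' (y - xstar)"
  define IU where "IU = inner u (y - xstar)"
  define IB where "IB = inner (B om - B xstar) (y - xstar)"
  define IC where "IC = inner (C om - C xstar) (y - xstar)"
  define IG where "IG = inner (B y - B om) (y - xstar)"
  define IUx where "IUx = inner u (x - xstar)"
  define IUyx where "IUyx = inner u (y - x)"
  define Y where "Y = norm_S S (y - xstar)"
  define V where "V = norm_S S (y - x)"
  define W where "W = norm_S S (y - om)"
  define X where "X = norm_S S (x - xstar)"
  define Om where "Om = norm_S S (om - xstar)"
  have mono: "0 \<le> IS - IU' + IU - t * IB - t * IC"
    using resolvent_inclusion_inequality[OF A xstar y u' t]
    unfolding IS_def IU'_def IU_def IB_def IC_def .
  have three: "2 * IS = (1 - p) * X\<^sup>2 + p * Om\<^sup>2 - Y\<^sup>2 - (1 - p) * V\<^sup>2 - p * W\<^sup>2"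
    unfolding IS_def X_def Om_def Y_def V_def W_def by (rule convex_comb_three_point[OF xb])
  have "inner (B y - B xstar) (y - xstar) = IG + IB"
    unfolding IG_def IB_def by (simp add: inner_diff_left)
  moreover have "\<mu> * Y\<^sup>2 \<le> inner (B y - B xstar) (y - xstar)"
    using B unfolding strongly_monotone_wrt_def Y_def by blast
  ultimately have "\<mu> * Y\<^sup>2 \<le> IG + IB" by simp
  from mult_left_mono[OF this less_imp_le[OF t]]
  have strong: "t * \<mu> * Y\<^sup>2 \<le> t * IG + t * IB" by (simp add: algebra_simps)
  have "- IC \<le> \<beta> / 4 * W\<^sup>2"
    unfolding IC_def W_def using cocoercive_cross_bound[OF C \<beta>] by (simp add: norm_S_minus_commute)
  from mult_left_mono[OF this less_imp_le[OF t]]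
  have coco: "- (t * IC) \<le> t * \<beta> / 4 * W\<^sup>2" by simp
  have "IUyx \<le> Lp * U * V"
  proof -
    have "IUyx \<le> norm_S (inv S) u * V" unfolding IUyx_def V_def by (rule inner_le_dual_norm)
    also have "\<dots> \<le> Lp * U * V" using u norm_S_nonneg unfolding V_def by (rule mult_right_mono)
    finally show ?thesis .
  qed
  moreover have "Lp * (2 * U * V) \<le> Lp * (1 * U\<^sup>2 + V\<^sup>2 / 1)"
    using Lp two_mult_le_weighted_squares[of 1 U V] by (intro mult_left_mono) auto
  ultimately have cross: "2 * IUyx \<le> Lp * U\<^sup>2 + Lp * V\<^sup>2" by (simp add: algebra_simps)
  have split: "IU = IUx + IUyx" unfolding IU_def IUx_def IUyx_def by (simp add: inner_diff_right)
  define s1 where "s1 = IS - IU' + IU - t * IB - t * IC"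
  define s2 where "s2 = t * IG + t * IB - t * \<mu> * Y\<^sup>2"
  define s3 where "s3 = t * \<beta> / 4 * W\<^sup>2 + t * IC"
  define s4 where "s4 = Lp * U\<^sup>2 + Lp * V\<^sup>2 - 2 * IUyx"
  define e1 where "e1 = 2 * IS - ((1 - p) * X\<^sup>2 + p * Om\<^sup>2 - Y\<^sup>2 - (1 - p) * V\<^sup>2 - p * W\<^sup>2)"
  define e2 where "e2 = IU - IUx - IUyx"
  have "(1 - p) * X\<^sup>2 + Om\<^sup>2 + 2 * IUx + Lp * U\<^sup>2
      - (Y\<^sup>2 - 2 * t * IG + 2 * IU' + (1 - p) * Om\<^sup>2 + 2 * t * \<mu> * Y\<^sup>2 + (1 - p - Lp) * V\<^sup>2
         + (p - t * \<beta> / 2) * W\<^sup>2)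
    = 2 * s1 + 2 * s2 + 2 * s3 + s4 - e1 - 2 * e2"
    unfolding s1_def s2_def s3_def s4_def e1_def e2_def by (simp add: algebra_simps)
  moreover have "0 \<le> s1" "0 \<le> s2" "0 \<le> s3" "0 \<le> s4" "e1 = 0" "e2 = 0"
    unfolding s1_def s2_def s3_def s4_def e1_def e2_def
    using mono three strong coco cross split by linarith+
  ultimately show ?thesis
    unfolding IU'_def[symmetric] IG_def[symmetric] IUx_def[symmetric] Y_def[symmetric]
      V_def[symmetric] W_def[symmetric] X_def[symmetric] Om_def[symmetric]
    by linarith
qed

lemma lyapunov_one_step:
  fixes A :: "'a \<Rightarrow> 'a set" and B C M :: "'a \<Rightarrow> 'a" and Q :: "'i pmf"
    and Bxi :: "'i \<Rightarrow> 'a \<Rightarrow> 'a" and xn :: "'i \<Rightarrow> 'a"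
  assumes A: "monotone_setop A"
    and xstar: "- (B xstar + C xstar) \<in> A xstar"
    and y: "(M xb - (B om + C om) + (1 / t) *\<^sub>R u) - M y \<in> A y"
    and xb: "xb = (1 - p) *\<^sub>R x + p *\<^sub>R om"
    and u': "u' = (t *\<^sub>R M y - S y) - (t *\<^sub>R M xb - S xb)"
    and M: "lipschitz_wrt S Lc (\<lambda>v. t *\<^sub>R M v - S v)"
    and u: "norm_S (inv S) u \<le> Lp * U"
    and finite: "finite (set_pmf Q)"
    and unbiased: "B y - B om = (\<Sum>i\<in>set_pmf Q. pmf Q i *\<^sub>R (Bxi i y - Bxi i om))"
    and variance: "(\<Sum>i\<in>set_pmf Q. pmf Q i * (norm_S (inv S) (Bxi i y - Bxi i om))\<^sup>2)
      \<le> \<theta>\<^sup>2 * (norm_S S (y - om))\<^sup>2"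
    and xn: "\<And>i. xn i = y - t *\<^sub>R inv S (Bxi i y) + t *\<^sub>R inv S (Bxi i om)"
    and C: "cocoercive_wrt S \<beta> C" and B: "strongly_monotone_wrt S \<mu> B"
    and q: "0 < q" "q < 1" "p = q\<^sup>2"
    and r: "0 \<le> r" and Lc: "0 \<le> Lc" and Lp: "0 \<le> Lp" "Lp \<le> (1 - q) / 4" and eps: "0 < eps"
    and t: "0 < t" and \<theta>: "0 \<le> \<theta>" and \<beta>: "0 < \<beta>"
    and t\<theta>: "t * \<theta> \<le> q / 2" and t\<beta>: "t * \<beta> \<le> p"
    and t\<mu>: "r * (6 - 2 * p) + 2 * r * Lc / eps \<le> 2 * (t * \<mu>)"
    and margin: "4 * r * ((1 - p) * (4 + p) + p * Lc * (eps + 1)) + 4 * p * Lc \<le> p * (1 - q)"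
  shows "(1 + r) * ((\<Sum>i\<in>set_pmf Q. pmf Q i * ((norm_S S (xn i - xstar))\<^sup>2 + 2 * inner u' (xn i - xstar)))
            + (1 - p) * (norm_S S (om - xstar))\<^sup>2 + Lc * (norm_S S (y - xb))\<^sup>2)
     \<le> (1 - p) * (norm_S S (x - xstar))\<^sup>2 + (norm_S S (om - xstar))\<^sup>2 + 2 * inner u (x - xstar)
       + Lp * U\<^sup>2"
proof -
  have p: "0 < p" "p < 1" using q by (auto simp: power_less_one_iff)
  define g where "g = t * \<theta>"
  define Y where "Y = norm_S S (y - xstar)"
  define Ab where "Ab = norm_S S (y - xb)"
  define W where "W = norm_S S (y - om)"
  define V where "V = norm_S S (y - x)"
  define Om where "Om = norm_S S (om - xstar)"
  define IG where "IG = inner (B y - B om) (y - xstar)"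
  define IU' where "IU' = inner u' (y - xstar)"
  define L0 where "L0 = (\<Sum>i\<in>set_pmf Q. pmf Q i * ((norm_S S (xn i - xstar))\<^sup>2 + 2 * inner u' (xn i - xstar)))
    + (1 - p) * Om\<^sup>2 + Lc * Ab\<^sup>2"
  define E1 where "E1 = Y\<^sup>2 - 2 * t * IG + g\<^sup>2 * W\<^sup>2 + 2 * IU' + 2 * g * Lc * Ab * W + (1 - p) * Om\<^sup>2
    + Lc * Ab\<^sup>2"
  define E2 where "E2 = Y\<^sup>2 + 2 * g * W * Y + g\<^sup>2 * W\<^sup>2 + 2 * Lc * Ab * Y + 2 * g * Lc * Ab * W
    + (1 - p) * (Y + W)\<^sup>2 + Lc * Ab\<^sup>2"
  define D where "D = 2 * (t * \<mu>) * Y\<^sup>2 + (1 - p - Lp) * V\<^sup>2 + p * W\<^sup>2 - Lc * Ab\<^sup>2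
    - (t * \<beta> / 2 + g\<^sup>2) * W\<^sup>2 - 2 * g * Lc * Ab * W"
  have nonneg: "0 \<le> Y" "0 \<le> Ab" "0 \<le> W"
    unfolding Y_def Ab_def W_def by (simp_all add: norm_S_nonneg)
  have u'_bound: "norm_S (inv S) u' \<le> Lc * Ab"
    using M unfolding lipschitz_wrt_def u' Ab_def by blast
  \<comment> \<open>\<open>L0\<close> is the expected next Lyapunov value, \<open>E1\<close> and \<open>E2\<close> are successively cruder bounds
    for it, and \<open>D\<close> is the guaranteed decrease: \<open>(1 + r) L0 \<le> E1 + r E2 \<le> E1 + D\<close>.\<close>
  have "L0 \<le> E1"
  proof -
    have "2 * (t * \<theta>) * (Lc * Ab) * W = 2 * (t * \<theta>) * Lc * Ab * W" by simp
    then show ?thesis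
      using expected_oracle_step_le[OF finite unbiased variance xn u'_bound t \<theta>, where xstar = xstar]
      unfolding L0_def E1_def Y_def IG_def IU'_def W_def g_def by linarith
  qed
  moreover have "E1 \<le> E2"
  proof -
    have "- IG \<le> \<theta> * W * Y"
      using oracle_deviation_bounds(1)[OF finite unbiased variance \<theta>] unfolding IG_def W_def Y_def .
    from mult_left_mono[OF this less_imp_le[OF t]]
    have "- (t * IG) \<le> g * W * Y" unfolding g_def by (simp add: algebra_simps)
    moreover have "IU' \<le> Lc * Ab * Y"
      using inner_le_dual_norm[of u' "y - xstar"] mult_right_mono[OF u'_bound, of Y] nonneg
      unfolding IU'_def Y_def by linarith
    moreover have "Om \<le> Y + W"
      using norm_S_triangle_diff[of om xstar y]
      unfolding Om_def Y_def W_def norm_S_minus_commute[of om y] by simp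
    then have "Om\<^sup>2 \<le> (Y + W)\<^sup>2"
      unfolding Om_def by (intro power_mono) (simp_all add: norm_S_nonneg)
    then have "(1 - p) * Om\<^sup>2 \<le> (1 - p) * (Y + W)\<^sup>2"
      using p by (intro mult_left_mono) auto
    ultimately show ?thesis unfolding E1_def E2_def by linarith
  qed
  moreover have "r * E2 \<le> D"
    unfolding E2_def D_def
  proof (rule lyapunov_margin_dominates[OF q r Lc Lp eps _ _ _ t\<beta> t\<mu> margin nonneg])
    show "0 \<le> g" "g \<le> q / 2" "0 \<le> t * \<beta>" unfolding g_def using t \<theta> \<beta> t\<theta> by auto
    show "(Ab - p * W)\<^sup>2 \<le> (1 - p)\<^sup>2 * V\<^sup>2"
      unfolding Ab_def W_def V_def using p by (intro convex_comb_distance_defect[OF xb]) auto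
  qed
  moreover have "E1 + D
      \<le> (1 - p) * (norm_S S (x - xstar))\<^sup>2 + Om\<^sup>2 + 2 * inner u (x - xstar) + Lp * U\<^sup>2"
  proof -
    have "E1 + D = Y\<^sup>2 - 2 * t * IG + 2 * IU' + (1 - p) * Om\<^sup>2 + 2 * t * \<mu> * Y\<^sup>2
        + (1 - p - Lp) * V\<^sup>2 + (p - t * \<beta> / 2) * W\<^sup>2"
      unfolding E1_def D_def by (simp add: algebra_simps)
    then show ?thesis
      using resolvent_step_bound[OF A xstar y xb u' u C B t \<beta> Lp(1)]
      unfolding Y_def IG_def IU'_def Om_def V_def W_def by simp
  qed
  moreover have "r * L0 \<le> r * E2" using \<open>L0 \<le> E1\<close> \<open>E1 \<le> E2\<close> r by (intro mult_left_mono) auto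
  ultimately have "(1 + r) * L0
      \<le> (1 - p) * (norm_S S (x - xstar))\<^sup>2 + Om\<^sup>2 + 2 * inner u (x - xstar) + Lp * U\<^sup>2"
    by (simp add: algebra_simps)
  then show ?thesis unfolding L0_def Om_def Ab_def .
qed

lemma resolvent_unique:
  assumes A: "monotone_setop A" and M: "lipschitz_wrt S L (\<lambda>v. t *\<^sub>R M v - S v)"
    and L: "L < 1" and t: "0 < t"
    and z: "v - M z \<in> A z" and z': "v - M z' \<in> A z'"
  shows "z = z'"
proof -
  define d where "d = z - z'"
  define e where "e = (t *\<^sub>R M z - S z) - (t *\<^sub>R M z' - S z')"
  have "0 \<le> inner ((v - M z) - (v - M z')) (z - z')"
    using A z z' unfolding monotone_setop_def by blast
  then have "t * inner (M z - M z') d \<le> 0"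
    using t unfolding d_def by (simp add: inner_diff_left mult_nonneg_nonpos)
  moreover have "t * inner (M z - M z') d = inner (S d) d + inner e d"
    unfolding d_def e_def by (simp add: S_diff inner_diff_left algebra_simps)
  moreover have "- (L * (norm_S S d)\<^sup>2) \<le> inner e d"
  proof -
    have "norm_S (inv S) e * norm_S S d \<le> L * norm_S S d * norm_S S d"
      using M norm_S_nonneg unfolding lipschitz_wrt_def e_def d_def by (intro mult_right_mono) auto
    then show ?thesis using inner_ge_neg_dual_norm[of e d] by (simp add: power2_eq_square mult.assoc)
  qed
  ultimately have "(1 - L) * inner (S d) d \<le> 0" by (simp add: norm_S_squared algebra_simps)
  then have "inner (S d) d = 0" using L quad_nonneg[of d] by (simp add: mult_le_0_iff)
  then have "d = 0" by (rule quad_eq_0D)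
  then show ?thesis unfolding d_def by simp
qed

end

section \<open>Finitely valued independent draws\<close>

lemma integral_measure_pmf_finite:
  fixes f :: "'a \<Rightarrow> 'b::{real_normed_vector, second_countable_topology}"
  assumes finite: "finite (set_pmf M)"
  shows "integral\<^sup>L (measure_pmf M) f = (\<Sum>a\<in>set_pmf M. pmf M a *\<^sub>R f a)"
proof -
  have "integral\<^sup>L (measure_pmf M) f
      = integral\<^sup>L (measure_pmf M) (\<lambda>x. \<Sum>a\<in>set_pmf M. indicator {a} x *\<^sub>R f a)"
  proof (rule integral_cong_AE)
    show "AE x in measure_pmf M. f x = (\<Sum>a\<in>set_pmf M. indicator {a} x *\<^sub>R f a)"
      using AE_measure_pmf[of M]
    proof eventually_elim
      case (elim x)
      have "(\<Sum>a\<in>set_pmf M. indicator {a} x *\<^sub>R f a) = (\<Sum>a\<in>set_pmf M. if x = a then f a else 0)"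
        by (intro sum.cong) (auto simp: indicator_def)
      then show ?case using elim finite by (simp add: sum.delta)
    qed
  qed simp_all
  also have "\<dots> = (\<Sum>a\<in>set_pmf M. integral\<^sup>L (measure_pmf M) (indicator {a}) *\<^sub>R f a)"
    by (subst Bochner_Integration.integral_sum)
      (auto intro!: integrable_scaleR_left integrable_real_indicator
        simp: measure_pmf.emeasure_eq_measure)
  also have "\<dots> = (\<Sum>a\<in>set_pmf M. pmf M a *\<^sub>R f a)"
    by (simp add: measure_pmf_single)
  finally show ?thesis .
qed

locale finite_iid_draws = prob_space Pr for Pr :: "'w measure" +
  fixes D :: "nat \<Rightarrow> 'w \<Rightarrow> 'd::countable" and dist :: "'d pmf"
  assumes indep: "indep_vars (\<lambda>_. count_space UNIV) D UNIV"
    and distr_D: "\<And>j. distr Pr (count_space UNIV) (D j) = measure_pmf dist"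
    and finite_support: "finite (set_pmf dist)"
begin

definition history :: "nat \<Rightarrow> 'w \<Rightarrow> 'd list" where
  "history k w = map (\<lambda>j. D j w) [0..<k]"

definition histories :: "nat \<Rightarrow> 'd list set" where
  "histories k = {l. length l = k \<and> set l \<subseteq> set_pmf dist}"

definition history_prob :: "'d list \<Rightarrow> real" where
  "history_prob l = (\<Prod>j<length l. pmf dist (l ! j))"

definition realization :: "nat \<Rightarrow> 'd list \<Rightarrow> 'w" where
  "realization k l = (SOME w. w \<in> space Pr \<and> history k w = l)"

lemma measurable_D [measurable]: "D j \<in> measurable Pr (count_space UNIV)"
  using indep unfolding indep_vars_def by auto

lemma history_Suc: "history (Suc k) w = history k w @ [D k w]"
  unfolding history_def by simp

lemma length_history [simp]: "length (history k w) = k"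
  unfolding history_def by simp

lemma history_take: "j \<le> k \<Longrightarrow> history j w = take j (history k w)"
  unfolding history_def by (simp add: take_map)

lemma finite_histories: "finite (histories k)"
  unfolding histories_def using finite_lists_length_eq[OF finite_support, of k]
  by (simp add: conj_commute)

lemma history_prob_nonneg: "0 \<le> history_prob l"
  unfolding history_prob_def by (intro prod_nonneg) auto

lemma history_prob_pos: "l \<in> histories k \<Longrightarrow> 0 < history_prob l"
  unfolding history_prob_def histories_def
  by (intro prod_pos) (auto simp: pmf_positive dest: nth_mem)

lemma history_eq_iff: "length l = k \<Longrightarrow> history k w = l \<longleftrightarrow> (\<forall>j<k. D j w = l ! j)"
  unfolding history_def by (auto simp: list_eq_iff_nth_eq)

lemma sets_history_eq: "{w \<in> space Pr. history k w = l} \<in> sets Pr"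
proof (cases "length l = k")
  case True
  then show ?thesis by (simp only: history_eq_iff) measurable
next
  case False
  then have "{w \<in> space Pr. history k w = l} = {}" by auto
  then show ?thesis by (simp only: sets.empty_sets)
qed

lemma measurable_history: "history k \<in> measurable Pr (count_space UNIV)"
proof -
  have "history k -` {l} \<inter> space Pr = {w \<in> space Pr. history k w = l}" for l by auto
  then show ?thesis using sets_history_eq by (simp add: measurable_count_space_eq2_countable)
qed

lemma prob_history_eq: "length l = k \<Longrightarrow> prob {w \<in> space Pr. history k w = l} = history_prob l"
proof -
  assume len: "length l = k"
  have D_eq: "prob (D j -` {d} \<inter> space Pr) = pmf dist d" for j d
    using measure_distr[of "D j" Pr "count_space UNIV" "{d}"] distr_D[of j]
    by (simp add: measure_pmf_single)
  show ?thesis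
  proof (cases "k = 0")
    case True
    then show ?thesis using len unfolding history_prob_def history_def by (simp add: prob_space)
  next
    case False
    have "{w \<in> space Pr. history k w = l} = (\<Inter>j\<in>{0..<k}. D j -` {l ! j} \<inter> space Pr)"
      using history_eq_iff[OF len] False by auto
    then have "prob {w \<in> space Pr. history k w = l} = (\<Prod>j\<in>{0..<k}. prob (D j -` {l ! j} \<inter> space Pr))"
      using indep_varsD[OF indep] False by auto
    then show ?thesis unfolding history_prob_def D_eq len by (simp add: atLeast0LessThan)
  qed
qed

lemma AE_history_in_histories: "AE w in Pr. history k w \<in> histories k"
proof -
  have "AE w in Pr. D j w \<in> set_pmf dist" for j
  proof (rule AE_distrD[OF measurable_D])
    show "AE d in distr Pr (count_space UNIV) (D j). d \<in> set_pmf dist"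
      unfolding distr_D by (rule AE_measure_pmf)
  qed
  then have "AE w in Pr. \<forall>j. D j w \<in> set_pmf dist" by (simp add: AE_all_countable)
  then show ?thesis by eventually_elim (auto simp: histories_def history_def)
qed

lemma integral_comp_history:
  "integral\<^sup>L Pr (\<lambda>w. F (history k w)) = (\<Sum>l\<in>histories k. history_prob l * F l)"
proof -
  define E where "E l = {w \<in> space Pr. history k w = l}" for l
  have sets_E: "E l \<in> sets Pr" for l unfolding E_def by (rule sets_history_eq)
  have "integral\<^sup>L Pr (\<lambda>w. F (history k w))
      = integral\<^sup>L Pr (\<lambda>w. \<Sum>l\<in>histories k. F l * indicator (E l) w)"
  proof (rule integral_cong_AE)
    show "(\<lambda>w. F (history k w)) \<in> borel_measurable Pr"
      using measurable_comp[OF measurable_history, of F borel] by (simp add: comp_def)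
    show "(\<lambda>w. \<Sum>l\<in>histories k. F l * indicator (E l) w) \<in> borel_measurable Pr"
      using sets_E by (intro borel_measurable_sum borel_measurable_times) auto
    show "AE w in Pr. F (history k w) = (\<Sum>l\<in>histories k. F l * indicator (E l) w)"
      using AE_history_in_histories[of k] AE_space
    proof eventually_elim
      case (elim w)
      have "(\<Sum>l\<in>histories k. F l * indicator (E l) w)
          = (\<Sum>l\<in>histories k. if history k w = l then F l else 0)"
        using elim by (intro sum.cong) (auto simp: E_def indicator_def)
      also have "\<dots> = F (history k w)" using elim finite_histories by (simp add: sum.delta)
      finally show ?case by simp
    qed
  qed
  also have "\<dots> = (\<Sum>l\<in>histories k. F l * prob (E l))"
    using sets_E by (subst Bochner_Integration.integral_sum)
      (auto intro!: integrable_mult_right integrable_real_indicator simp: emeasure_eq_measure)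
  also have "\<dots> = (\<Sum>l\<in>histories k. history_prob l * F l)"
    by (intro sum.cong) (auto simp: E_def prob_history_eq histories_def)
  finally show ?thesis .
qed

lemma realization_of_history:
  assumes "\<exists>w\<in>space Pr. history k w = l"
  shows "realization k l \<in> space Pr" "history k (realization k l) = l"
  using someI_ex[OF assms[unfolded Bex_def]] unfolding realization_def by auto

lemma realization:
  assumes "l \<in> histories k"
  shows "realization k l \<in> space Pr" "history k (realization k l) = l"
proof -
  have "0 < prob {w \<in> space Pr. history k w = l}"
    using assms prob_history_eq history_prob_pos unfolding histories_def by auto
  then have "{w \<in> space Pr. history k w = l} \<noteq> {}" by (intro notI) simp
  then have "\<exists>w\<in>space Pr. history k w = l" by blast
  then show "realization k l \<in> space Pr" "history k (realization k l) = l"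
    by (rule realization_of_history)+
qed

lemma integral_history_determined:
  assumes "\<And>w w'. w \<in> space Pr \<Longrightarrow> w' \<in> space Pr \<Longrightarrow> history k w = history k w' \<Longrightarrow> G w = G w'"
  shows "integral\<^sup>L Pr G = (\<Sum>l\<in>histories k. history_prob l * G (realization k l))"
proof -
  have "integral\<^sup>L Pr G = integral\<^sup>L Pr (\<lambda>w. G (realization k (history k w)))"
  proof (rule Bochner_Integration.integral_cong[OF refl])
    fix w assume w: "w \<in> space Pr"
    then have "\<exists>w'\<in>space Pr. history k w' = history k w" by blast
    from realization_of_history[OF this]
    show "G w = G (realization k (history k w))" by (intro assms[OF w]) auto
  qed
  also have "\<dots> = (\<Sum>l\<in>histories k. history_prob l * G (realization k l))"
    by (rule integral_comp_history)
  finally show ?thesis .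
qed

lemma histories_Suc: "histories (Suc k) = (\<lambda>(l, d). l @ [d]) ` (histories k \<times> set_pmf dist)"
proof
  show "histories (Suc k) \<subseteq> (\<lambda>(l, d). l @ [d]) ` (histories k \<times> set_pmf dist)"
  proof
    fix l' assume "l' \<in> histories (Suc k)"
    then have "length l' = Suc k" "set l' \<subseteq> set_pmf dist" unfolding histories_def by auto
    moreover obtain l d where "l' = l @ [d]" using \<open>length l' = Suc k\<close> by (metis length_Suc_conv_rev)
    ultimately show "l' \<in> (\<lambda>(l, d). l @ [d]) ` (histories k \<times> set_pmf dist)"
      unfolding histories_def by (auto intro!: image_eqI[where x="(l, d)"])
  qed
qed (auto simp: histories_def)

lemma sum_histories_Suc:
  "(\<Sum>l\<in>histories (Suc k). history_prob l * F l)
   = (\<Sum>l\<in>histories k. history_prob l * (\<Sum>d\<in>set_pmf dist. pmf dist d * F (l @ [d])))"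
proof -
  have inj: "inj_on (\<lambda>(l, d). l @ [d]) (histories k \<times> set_pmf dist)" by (auto simp: inj_on_def)
  have history_prob_snoc: "history_prob (l @ [d]) = history_prob l * pmf dist d" for l d
    unfolding history_prob_def by (simp add: lessThan_Suc nth_append mult.commute)
  have "(\<Sum>l\<in>histories (Suc k). history_prob l * F l)
      = (\<Sum>(l, d)\<in>histories k \<times> set_pmf dist. history_prob (l @ [d]) * F (l @ [d]))"
    unfolding histories_Suc by (subst sum.reindex[OF inj]) (simp add: case_prod_beta)
  also have "\<dots> = (\<Sum>l\<in>histories k. \<Sum>d\<in>set_pmf dist. history_prob (l @ [d]) * F (l @ [d]))"
    by (rule sum.cartesian_product[symmetric])
  also have "\<dots> = (\<Sum>l\<in>histories k. history_prob l * (\<Sum>d\<in>set_pmf dist. pmf dist d * F (l @ [d])))"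
    by (simp add: history_prob_snoc sum_distrib_left mult.assoc)
  finally show ?thesis .
qed

end

section \<open>The iteration\<close>

locale svr_nfbhf_m = prob_space Pr + strongly_positive S
  for Pr :: "'w measure" and S :: "'a::{real_inner, complete_space, second_countable_topology} \<Rightarrow> 'a" +
  fixes A :: "'a \<Rightarrow> 'a set" and B C :: "'a \<Rightarrow> 'a" and Q :: "nat pmf" and Bxi :: "nat \<Rightarrow> 'a \<Rightarrow> 'a"
    and \<theta> \<beta> \<mu> :: real and xstar :: 'a
    and Mk :: "nat \<Rightarrow> 'a \<Rightarrow> 'a" and Lk :: "nat \<Rightarrow> real" and \<gamma> p :: real and x0 u0 :: 'a
    and x om u y xbar :: "nat \<Rightarrow> 'w \<Rightarrow> 'a" and \<xi> :: "nat \<Rightarrow> 'w \<Rightarrow> nat" and coin :: "nat \<Rightarrow> 'w \<Rightarrow> bool"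
  assumes A_monotone: "monotone_setop A"
    and finite_Q: "finite (set_pmf Q)"
    and oracle_unbiased: "\<And>z. measure_pmf.expectation Q (\<lambda>i. Bxi i z) = B z"
    and oracle_var: "\<And>z v. measure_pmf.expectation Q (\<lambda>i. (norm_S (inv S) (Bxi i z - Bxi i v))\<^sup>2)
                        \<le> \<theta>\<^sup>2 * (norm_S S (z - v))\<^sup>2"
    and \<theta>: "0 \<le> \<theta>" and \<beta>: "0 < \<beta>" and C: "cocoercive_wrt S \<beta> C"
    and B_strong: "strongly_monotone_wrt S \<mu> B"
    and xstar: "- (B xstar + C xstar) \<in> A xstar"
    and p: "0 < p" "p < 1" and \<gamma>: "0 < \<gamma>"
    and Lk_nonneg: "\<And>k. 0 \<le> Lk k" and Lk_lt1: "\<And>k. Lk k < 1"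
    and Mk: "\<And>k. lipschitz_wrt S (Lk k) (\<lambda>v. \<gamma> *\<^sub>R Mk k v - S v)"
    and draws_indep: "indep_vars (\<lambda>_. count_space UNIV) (\<lambda>k w. (\<xi> k w, coin k w)) UNIV"
    and draws_distr: "\<And>k. distr Pr (count_space UNIV) (\<lambda>w. (\<xi> k w, coin k w))
                          = measure_pmf (pair_pmf Q (bernoulli_pmf p))"
    and init_x: "\<And>w. w \<in> space Pr \<Longrightarrow> x 0 w = x0"
    and init_u: "\<And>w. w \<in> space Pr \<Longrightarrow> u 0 w = u0"
    and init_om: "\<And>w. w \<in> space Pr \<Longrightarrow> om 0 w = x0"
    and step_xbar: "\<And>k w. w \<in> space Pr \<Longrightarrow> xbar k w = (1 - p) *\<^sub>R x k w + (1 - (1 - p)) *\<^sub>R om k w"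
    and step_y: "\<And>k w. w \<in> space Pr \<Longrightarrow>
        (Mk k (xbar k w) - (B (om k w) + C (om k w)) + (1 / \<gamma>) *\<^sub>R u k w) - Mk k (y k w) \<in> A (y k w)"
    and step_u: "\<And>k w. w \<in> space Pr \<Longrightarrow>
        u (Suc k) w = (\<gamma> *\<^sub>R Mk k (y k w) - S (y k w)) - (\<gamma> *\<^sub>R Mk k (xbar k w) - S (xbar k w))"
    and step_x: "\<And>k w. w \<in> space Pr \<Longrightarrow>
        x (Suc k) w = y k w - \<gamma> *\<^sub>R inv S (Bxi (\<xi> k w) (y k w)) + \<gamma> *\<^sub>R inv S (Bxi (\<xi> k w) (om k w))"
    and step_om: "\<And>k w. w \<in> space Pr \<Longrightarrow> om (Suc k) w = (if coin k w then x (Suc k) w else om k w)"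
begin

definition draw :: "nat \<Rightarrow> 'w \<Rightarrow> nat \<times> bool" where
  "draw k w = (\<xi> k w, coin k w)"

definition draw_pmf :: "(nat \<times> bool) pmf" where
  "draw_pmf = pair_pmf Q (bernoulli_pmf p)"

lemma set_draw_pmf: "set_pmf draw_pmf = set_pmf Q \<times> UNIV"
  unfolding draw_pmf_def using p by simp

sublocale draws: finite_iid_draws Pr draw draw_pmf
proof unfold_locales
  show "indep_vars (\<lambda>_. count_space UNIV) draw UNIV"
    using draws_indep unfolding draw_def .
  show "distr Pr (count_space UNIV) (draw j) = measure_pmf draw_pmf" for j
    using draws_distr[of j] unfolding draw_def draw_pmf_def .
  show "finite (set_pmf draw_pmf)" unfolding set_draw_pmf using finite_Q by simp
qed

lemma oracle_sum_unbiased: "B a - B b = (\<Sum>i\<in>set_pmf Q. pmf Q i *\<^sub>R (Bxi i a - Bxi i b))"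
proof -
  have "B z = (\<Sum>i\<in>set_pmf Q. pmf Q i *\<^sub>R Bxi i z)" for z
    using oracle_unbiased[of z] integral_measure_pmf_finite[OF finite_Q, of "\<lambda>i. Bxi i z"] by simp
  then show ?thesis by (simp add: sum_subtractf[symmetric] scaleR_diff_right)
qed

lemma oracle_sum_variance:
  "(\<Sum>i\<in>set_pmf Q. pmf Q i * (norm_S (inv S) (Bxi i a - Bxi i b))\<^sup>2) \<le> \<theta>\<^sup>2 * (norm_S S (a - b))\<^sup>2"
  using oracle_var[of a b]
    integral_measure_pmf_real[OF finite_Q, of Q "\<lambda>i. (norm_S (inv S) (Bxi i a - Bxi i b))\<^sup>2"]
  by (simp add: mult.commute)

lemma resolvent_step_determined:
  assumes w: "w \<in> space Pr" "w' \<in> space Pr"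
    and eq: "x k w = x k w'" "om k w = om k w'" "u k w = u k w'"
  shows "xbar k w = xbar k w'" "y k w = y k w'"
proof -
  show xbar: "xbar k w = xbar k w'" using step_xbar[OF w(1)] step_xbar[OF w(2)] eq by simp
  show "y k w = y k w'"
    using step_y[OF w(1)] step_y[OF w(2)] eq xbar
    by (intro resolvent_unique[OF A_monotone Mk Lk_lt1 \<gamma>]) auto
qed

lemma iterates_determined_by_history:
  "w \<in> space Pr \<Longrightarrow> w' \<in> space Pr \<Longrightarrow> draws.history k w = draws.history k w' \<Longrightarrow>
    x k w = x k w' \<and> om k w = om k w' \<and> u k w = u k w'"
proof (induction k)
  case 0
  then show ?case using init_x init_u init_om by simp
next
  case (Suc k)
  then have "draws.history k w = draws.history k w'" "draw k w = draw k w'"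
    unfolding draws.history_Suc by auto
  then have eq: "x k w = x k w'" "om k w = om k w'" "u k w = u k w'" "\<xi> k w = \<xi> k w'"
    "coin k w = coin k w'"
    using Suc unfolding draw_def by auto
  note det = resolvent_step_determined[OF Suc.prems(1,2) eq(1-3)]
  have "x (Suc k) w = x (Suc k) w'" using step_x[OF Suc.prems(1)] step_x[OF Suc.prems(2)] eq det by simp
  moreover have "om (Suc k) w = om (Suc k) w'"
    using step_om[OF Suc.prems(1)] step_om[OF Suc.prems(2)] eq calculation by simp
  moreover have "u (Suc k) w = u (Suc k) w'" using step_u[OF Suc.prems(1)] step_u[OF Suc.prems(2)] det by simp
  ultimately show ?case by simp
qed

lemma iterates_determined:
  assumes "j \<le> k" "w \<in> space Pr" "w' \<in> space Pr" "draws.history k w = draws.history k w'"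
  shows "x j w = x j w'" "om j w = om j w'" "u j w = u j w'" "y j w = y j w'" "xbar j w = xbar j w'"
proof -
  have "draws.history j w = draws.history j w'"
    using assms(4) draws.history_take[OF assms(1)] by metis
  then have "x j w = x j w'" "om j w = om j w'" "u j w = u j w'"
    using iterates_determined_by_history assms(2,3) by blast+
  with resolvent_step_determined[OF assms(2,3)]
  show "x j w = x j w'" "om j w = om j w'" "u j w = u j w'" "y j w = y j w'" "xbar j w = xbar j w'"
    by auto
qed

text \<open>This is \<open>\<Phi>\<^sub>k\<close>; only \<open>k \<ge> 1\<close> is meaningful, since \<open>k - 1\<close> truncates at \<open>0\<close>.\<close>
definition lyapunov :: "nat \<Rightarrow> 'w \<Rightarrow> real" where
  "lyapunov k w = (1 - p) * (norm_S S (x k w - xstar))\<^sup>2 + (norm_S S (om k w - xstar))\<^sup>2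
     + (2 * inner (u k w) (x k w - xstar) + Lk (k - 1) * (norm_S S (y (k - 1) w - xbar (k - 1) w))\<^sup>2)"

lemma integral_lyapunov:
  "integral\<^sup>L Pr (lyapunov k) = (\<Sum>l\<in>draws.histories k. draws.history_prob l * lyapunov k (draws.realization k l))"
proof (rule draws.integral_history_determined)
  fix w w' assume "w \<in> space Pr" "w' \<in> space Pr" "draws.history k w = draws.history k w'"
  from iterates_determined[OF _ this] show "lyapunov k w = lyapunov k w'"
    unfolding lyapunov_def by simp
qed

definition x_next :: "nat \<Rightarrow> 'w \<Rightarrow> nat \<Rightarrow> 'a" where
  "x_next k w i = y k w - \<gamma> *\<^sub>R inv S (Bxi i (y k w)) + \<gamma> *\<^sub>R inv S (Bxi i (om k w))"

lemma lyapunov_after_draw: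
  assumes l: "l \<in> draws.histories k" and d: "d \<in> set_pmf draw_pmf"
  defines "w \<equiv> draws.realization k l"
  shows "lyapunov (Suc k) (draws.realization (Suc k) (l @ [d]))
    = (1 - p) * (norm_S S (x_next k w (fst d) - xstar))\<^sup>2
      + (norm_S S ((if snd d then x_next k w (fst d) else om k w) - xstar))\<^sup>2
      + (2 * inner (u (Suc k) w) (x_next k w (fst d) - xstar)
         + Lk k * (norm_S S (y k w - xbar k w))\<^sup>2)"
proof -
  define w' where "w' = draws.realization (Suc k) (l @ [d])"
  have "l @ [d] \<in> draws.histories (Suc k)" unfolding draws.histories_Suc using l d by auto
  then have w': "w' \<in> space Pr" "draws.history (Suc k) w' = l @ [d]"
    unfolding w'_def by (rule draws.realization)+
  have w: "w \<in> space Pr" "draws.history k w = l" unfolding w_def by (rule draws.realization[OF l])+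
  have "draws.history k w' = draws.history k w" "draw k w' = d"
    using w w' unfolding draws.history_Suc by auto
  note same = iterates_determined[OF order_refl w'(1) w(1) this(1)]
  have "\<xi> k w' = fst d" "coin k w' = snd d" using \<open>draw k w' = d\<close> unfolding draw_def by auto
  then have "x (Suc k) w' = x_next k w (fst d)"
    "om (Suc k) w' = (if snd d then x_next k w (fst d) else om k w)"
    "u (Suc k) w' = u (Suc k) w"
    using step_x step_om step_u w(1) w'(1) same unfolding x_next_def by auto
  then show ?thesis unfolding lyapunov_def w'_def[symmetric] using same by simp
qed

lemma expected_lyapunov_after_draw:
  assumes "l \<in> draws.histories k"
  defines "w \<equiv> draws.realization k l"
  shows "(\<Sum>d\<in>set_pmf draw_pmf. pmf draw_pmf d * lyapunov (Suc k) (draws.realization (Suc k) (l @ [d])))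
    = (\<Sum>i\<in>set_pmf Q. pmf Q i * ((norm_S S (x_next k w i - xstar))\<^sup>2
          + 2 * inner (u (Suc k) w) (x_next k w i - xstar)))
      + (1 - p) * (norm_S S (om k w - xstar))\<^sup>2 + Lk k * (norm_S S (y k w - xbar k w))\<^sup>2"
proof -
  define c where "c = (1 - p) * (norm_S S (om k w - xstar))\<^sup>2 + Lk k * (norm_S S (y k w - xbar k w))\<^sup>2"
  define f where "f i = (norm_S S (x_next k w i - xstar))\<^sup>2 + 2 * inner (u (Suc k) w) (x_next k w i - xstar)"
    for i
  have "(\<Sum>d\<in>set_pmf draw_pmf. pmf draw_pmf d * lyapunov (Suc k) (draws.realization (Suc k) (l @ [d])))
      = (\<Sum>(i, b)\<in>set_pmf Q \<times> UNIV. pmf Q i * pmf (bernoulli_pmf p) b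
          * ((1 - p) * (norm_S S (x_next k w i - xstar))\<^sup>2
             + (norm_S S ((if b then x_next k w i else om k w) - xstar))\<^sup>2
             + (2 * inner (u (Suc k) w) (x_next k w i - xstar) + Lk k * (norm_S S (y k w - xbar k w))\<^sup>2)))"
    unfolding set_draw_pmf[symmetric] using assms(1)
    by (intro sum.cong refl) (auto simp: lyapunov_after_draw w_def draw_pmf_def pmf_pair)
  also have "\<dots> = (\<Sum>i\<in>set_pmf Q. pmf Q i * (f i + c))"
    unfolding sum.cartesian_product[symmetric] UNIV_bool using p
    by (intro sum.cong refl) (simp add: f_def c_def algebra_simps)
  also have "\<dots> = (\<Sum>i\<in>set_pmf Q. pmf Q i * f i) + c"
    using finite_Q by (simp add: distrib_left sum.distrib sum_distrib_right[symmetric] sum_pmf_eq_1)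
  finally show ?thesis unfolding f_def c_def by simp
qed

lemma distance_le_lyapunov:
  assumes w: "w \<in> space Pr"
  shows "(1 - p - Lk k) * (norm_S S (x (Suc k) w - xstar))\<^sup>2 \<le> lyapunov (Suc k) w"
proof -
  define X where "X = norm_S S (x (Suc k) w - xstar)"
  define Ab where "Ab = norm_S S (y k w - xbar k w)"
  have "norm_S (inv S) (u (Suc k) w) \<le> Lk k * Ab"
    using step_u[OF w, of k] Mk[of k] unfolding lipschitz_wrt_def Ab_def by simp
  then have "- (Lk k * Ab * X) \<le> inner (u (Suc k) w) (x (Suc k) w - xstar)"
    using inner_ge_neg_dual_norm[of "u (Suc k) w" "x (Suc k) w - xstar"]
      mult_right_mono[of _ _ X] norm_S_nonneg unfolding X_def by (smt (verit))
  moreover have "2 * (Lk k * Ab * X) \<le> Lk k * Ab\<^sup>2 + Lk k * X\<^sup>2"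
    using mult_left_mono[OF two_mult_le_weighted_squares[of 1 Ab X] Lk_nonneg[of k]]
    by (simp add: algebra_simps)
  moreover have "lyapunov (Suc k) w = (1 - p) * X\<^sup>2 + (norm_S S (om (Suc k) w - xstar))\<^sup>2
      + (2 * inner (u (Suc k) w) (x (Suc k) w - xstar) + Lk k * Ab\<^sup>2)"
    unfolding lyapunov_def X_def Ab_def by simp
  moreover have "(1 - p - Lk k) * X\<^sup>2 = (1 - p) * X\<^sup>2 - Lk k * X\<^sup>2" by (simp add: algebra_simps)
  ultimately show ?thesis unfolding X_def[symmetric] using zero_le_power2 by smt
qed

end

locale svr_nfbhf_m_contraction = svr_nfbhf_m +
  fixes r \<epsilon> :: real
  assumes r: "0 \<le> r" and \<epsilon>: "0 < \<epsilon>"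
    and step_size_oracle: "\<gamma> * \<theta> \<le> sqrt p / 2"
    and step_size_cocoercive: "\<gamma> * \<beta> \<le> p"
    and Lk_small: "\<And>k. Lk k \<le> (1 - sqrt p) / 4"
    and rate_strong_monotone: "\<And>k. 1 \<le> k \<Longrightarrow> r * (6 - 2 * p) + 2 * r * Lk k / \<epsilon> \<le> 2 * (\<gamma> * \<mu>)"
    and rate_margin: "\<And>k. 1 \<le> k \<Longrightarrow>
      4 * r * ((1 - p) * (4 + p) + p * Lk k * (\<epsilon> + 1)) + 4 * p * Lk k \<le> p * (1 - sqrt p)"
begin

lemma lyapunov_realization_step:
  assumes l: "l \<in> draws.histories k" and k: "1 \<le> k"
  shows "(1 + r) * (\<Sum>d\<in>set_pmf draw_pmf.
      pmf draw_pmf d * lyapunov (Suc k) (draws.realization (Suc k) (l @ [d])))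
    \<le> lyapunov k (draws.realization k l)"
proof -
  define w where "w = draws.realization k l"
  have w: "w \<in> space Pr" unfolding w_def by (rule draws.realization[OF l])
  obtain k' where k': "k = Suc k'" using k by (cases k) auto
  have q: "0 < sqrt p" "sqrt p < 1" "p = (sqrt p)\<^sup>2" using p by (auto simp: real_sqrt_lt_1_iff)
  have "(1 + r) * ((\<Sum>i\<in>set_pmf Q. pmf Q i * ((norm_S S (x_next k w i - xstar))\<^sup>2
          + 2 * inner (u (Suc k) w) (x_next k w i - xstar)))
        + (1 - p) * (norm_S S (om k w - xstar))\<^sup>2 + Lk k * (norm_S S (y k w - xbar k w))\<^sup>2)
    \<le> (1 - p) * (norm_S S (x k w - xstar))\<^sup>2 + (norm_S S (om k w - xstar))\<^sup>2
      + 2 * inner (u k w) (x k w - xstar) + Lk k' * (norm_S S (y k' w - xbar k' w))\<^sup>2"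
  proof (rule lyapunov_one_step[OF A_monotone xstar step_y[OF w] _ step_u[OF w] Mk _ finite_Q
        oracle_sum_unbiased oracle_sum_variance x_next_def C B_strong q r Lk_nonneg Lk_nonneg
        Lk_small \<epsilon> \<gamma> \<theta> \<beta> step_size_oracle step_size_cocoercive rate_strong_monotone[OF k]
        rate_margin[OF k]])
    show "xbar k w = (1 - p) *\<^sub>R x k w + p *\<^sub>R om k w" using step_xbar[OF w] by simp
    show "norm_S (inv S) (u k w) \<le> Lk k' * norm_S S (y k' w - xbar k' w)"
      using step_u[OF w, of k'] Mk[of k'] unfolding lipschitz_wrt_def k' by simp
  qed
  then show ?thesis
    unfolding expected_lyapunov_after_draw[OF l] w_def[symmetric]
    unfolding lyapunov_def k' by (simp add: add.assoc)
qed

lemma expected_lyapunov_decrease: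
  assumes "1 \<le> k"
  shows "(1 + r) * integral\<^sup>L Pr (lyapunov (Suc k)) \<le> integral\<^sup>L Pr (lyapunov k)"
proof -
  have "(1 + r) * integral\<^sup>L Pr (lyapunov (Suc k))
      = (\<Sum>l\<in>draws.histories k. draws.history_prob l * ((1 + r) * (\<Sum>d\<in>set_pmf draw_pmf.
          pmf draw_pmf d * lyapunov (Suc k) (draws.realization (Suc k) (l @ [d])))))"
    unfolding integral_lyapunov draws.sum_histories_Suc by (simp add: sum_distrib_left algebra_simps)
  also have "\<dots> \<le> (\<Sum>l\<in>draws.histories k. draws.history_prob l * lyapunov k (draws.realization k l))"
    using assms by (intro sum_mono mult_left_mono lyapunov_realization_step draws.history_prob_nonneg)
  also have "\<dots> = integral\<^sup>L Pr (lyapunov k)" unfolding integral_lyapunov ..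
  finally show ?thesis .
qed

lemma expected_lyapunov_decay: "integral\<^sup>L Pr (lyapunov (Suc k)) * (1 + r) ^ k \<le> integral\<^sup>L Pr (lyapunov 1)"
proof (induction k)
  case (Suc k)
  have "integral\<^sup>L Pr (lyapunov (Suc (Suc k))) * (1 + r) ^ Suc k
      = ((1 + r) * integral\<^sup>L Pr (lyapunov (Suc (Suc k)))) * (1 + r) ^ k"
    by (simp add: algebra_simps)
  also have "\<dots> \<le> integral\<^sup>L Pr (lyapunov (Suc k)) * (1 + r) ^ k"
    using expected_lyapunov_decrease[of "Suc k"] r by (intro mult_right_mono) auto
  finally show ?case using Suc.IH by linarith
qed simp

lemma expected_distance_decay:
  "(1 - p - Lk k) * expectation (\<lambda>w. (norm_S S (x (Suc k) w - xstar))\<^sup>2)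
    \<le> expectation (lyapunov 1) / (1 + r) ^ k"
proof -
  have "expectation (\<lambda>w. (norm_S S (x (Suc k) w - xstar))\<^sup>2)
      = (\<Sum>l\<in>draws.histories (Suc k). draws.history_prob l
          * (norm_S S (x (Suc k) (draws.realization (Suc k) l) - xstar))\<^sup>2)"
  proof (rule draws.integral_history_determined)
    fix w w' assume "w \<in> space Pr" "w' \<in> space Pr" "draws.history (Suc k) w = draws.history (Suc k) w'"
    from iterates_determined(1)[OF order_refl this]
    show "(norm_S S (x (Suc k) w - xstar))\<^sup>2 = (norm_S S (x (Suc k) w' - xstar))\<^sup>2" by simp
  qed
  then have "(1 - p - Lk k) * expectation (\<lambda>w. (norm_S S (x (Suc k) w - xstar))\<^sup>2)
      \<le> (\<Sum>l\<in>draws.histories (Suc k). draws.history_prob l * lyapunov (Suc k) (draws.realization (Suc k) l))"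
  proof -
    have "(1 - p - Lk k) * (draws.history_prob l * (norm_S S (x (Suc k) w - xstar))\<^sup>2)
        \<le> draws.history_prob l * lyapunov (Suc k) w" if "w \<in> space Pr" for l w
      using mult_left_mono[OF distance_le_lyapunov[OF that] draws.history_prob_nonneg]
      by (simp add: mult.left_commute)
    then show ?thesis
      unfolding \<open>expectation _ = _\<close> sum_distrib_left
      by (intro sum_mono) (simp add: draws.realization)
  qed
  also have "\<dots> \<le> expectation (lyapunov 1) / (1 + r) ^ k"
    using expected_lyapunov_decay[of k] r unfolding integral_lyapunov
    by (simp add: pos_le_divide_eq)
  finally show ?thesis .
qed

end

section \<open>Step size and rate conditions\<close>

lemma step_size_bounds:
  fixes Lk :: "nat \<Rightarrow> real"
  assumes p: "0 < p" and \<theta>: "0 < \<theta>" and \<beta>: "0 < \<beta>" and \<alpha>: "0 < \<alpha>"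
    and Lk: "\<And>k. 0 \<le> Lk k" "\<And>k. Lk k < 1"
    and Lbar: "Lbar = Sup (range Lk)"
    and \<gamma>: "\<gamma> = (if Lbar = 0 then min (sqrt p / (2 * \<theta>)) (p / \<beta>)
                else min (min (sqrt p / (2 * \<theta>)) (p / \<beta>)) (\<alpha> / (Lbar * \<theta>)))"
  shows "0 < \<gamma>" "\<gamma> * \<theta> \<le> sqrt p / 2" "\<gamma> * \<beta> \<le> p"
proof -
  have "bdd_above (range Lk)" using Lk(2) by (intro bdd_aboveI[of _ 1]) (auto intro: less_imp_le)
  then have "0 \<le> Lbar" unfolding Lbar using Lk(1)[of 0] by (meson cSUP_upper2 UNIV_I)
  then show "0 < \<gamma>" unfolding \<gamma> using p \<theta> \<beta> \<alpha> by auto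
  have "\<gamma> \<le> sqrt p / (2 * \<theta>)" "\<gamma> \<le> p / \<beta>" unfolding \<gamma> by auto
  then show "\<gamma> * \<theta> \<le> sqrt p / 2" "\<gamma> * \<beta> \<le> p"
    using \<theta> \<beta> by (simp_all add: pos_le_divide_eq mult.commute)
qed

lemma rate_bound_strong_monotone:
  fixes p L \<epsilon> l c \<gamma> \<mu> :: real
  assumes L: "(3 - p) / 2 \<le> L" and p: "p < 1" and \<epsilon>: "0 < \<epsilon>" and l: "0 \<le> l" and c: "0 \<le> c"
    and c_le: "c \<le> \<gamma> * \<mu> / (1 + l / (2 * L * \<epsilon>))"
  shows "c / (2 * L) * (6 - 2 * p) + 2 * (c / (2 * L)) * l / \<epsilon> \<le> 2 * (\<gamma> * \<mu>)"
proof -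
  define r where "r = c / (2 * L)"
  have L0: "0 < L" using L p by simp
  have "0 < 1 + l / (2 * L * \<epsilon>)" using L0 \<epsilon> l by (simp add: add_pos_nonneg)
  then have "c * (1 + l / (2 * L * \<epsilon>)) \<le> \<gamma> * \<mu>" using c_le by (simp add: pos_le_divide_eq)
  moreover have "c * (1 + l / (2 * L * \<epsilon>)) = 2 * L * r + r * l / \<epsilon>"
    unfolding r_def using L0 \<epsilon> by (simp add: field_simps)
  moreover have "r * (6 - 2 * p) \<le> r * (4 * L)"
    unfolding r_def using L0 c L by (intro mult_left_mono) auto
  moreover have "2 * r * l / \<epsilon> = 2 * (r * l / \<epsilon>)" "r * (4 * L) = 4 * (L * r)" by simp_all
  ultimately show ?thesis unfolding r_def[symmetric] by linarith
qed

lemma rate_bound_margin: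
  fixes p L \<epsilon> \<alpha> l c :: real
  assumes L: "(3 - p) / 2 \<le> L" and p: "0 < p" "p < 1" and \<epsilon>: "0 < \<epsilon>" and \<alpha>: "0 < \<alpha>"
    and l: "0 \<le> l"
    and c_le: "c \<le> L * p * (1 - sqrt p - 4 * (l + \<alpha>)) / (2 * (1 - p) * (4 + p) + 2 * p * l * (\<epsilon> + 1))"
  shows "4 * (c / (2 * L)) * ((1 - p) * (4 + p) + p * l * (\<epsilon> + 1)) + 4 * p * l \<le> p * (1 - sqrt p)"
proof -
  define den where "den = 2 * (1 - p) * (4 + p) + 2 * p * l * (\<epsilon> + 1)"
  have L0: "0 < L" using L p by simp
  have "0 < den" unfolding den_def using p l \<epsilon> by (intro add_pos_nonneg) auto
  then have "c * den \<le> L * (p * (1 - sqrt p - 4 * (l + \<alpha>)))"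
    using c_le unfolding den_def[symmetric] by (simp add: pos_le_divide_eq mult.assoc)
  moreover have "c * den = L * (4 * (c / (2 * L)) * ((1 - p) * (4 + p) + p * l * (\<epsilon> + 1)))"
    unfolding den_def using L0 by (simp add: field_simps)
  ultimately have "L * (4 * (c / (2 * L)) * ((1 - p) * (4 + p) + p * l * (\<epsilon> + 1)))
      \<le> L * (p * (1 - sqrt p - 4 * (l + \<alpha>)))"
    by linarith
  then have "4 * (c / (2 * L)) * ((1 - p) * (4 + p) + p * l * (\<epsilon> + 1))
      \<le> p * (1 - sqrt p - 4 * (l + \<alpha>))"
    using L0 by (simp only: mult_le_cancel_left_pos)
  moreover have "p * (1 - sqrt p - 4 * (l + \<alpha>)) = p * (1 - sqrt p) - 4 * (p * l) - 4 * (p * \<alpha>)"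
    by (simp add: algebra_simps)
  moreover have "0 \<le> p * \<alpha>" "4 * p * l = 4 * (p * l)" using p \<alpha> by simp_all
  ultimately show ?thesis by linarith
qed

theorem theorem4p2:
  fixes Pr :: "'w measure"
    and S :: "'a::{real_inner, complete_space, second_countable_topology} \<Rightarrow> 'a"
    and A :: "'a \<Rightarrow> 'a set"
    and N :: nat and Bi :: "nat \<Rightarrow> 'a \<Rightarrow> 'a" and B :: "'a \<Rightarrow> 'a"
    and Q :: "nat pmf" and Bxi :: "nat \<Rightarrow> 'a \<Rightarrow> 'a" and \<theta> :: real
    and C :: "'a \<Rightarrow> 'a" and \<beta> :: real and \<mu> :: real
    and Mk :: "nat \<Rightarrow> 'a \<Rightarrow> 'a" and Lk :: "nat \<Rightarrow> real"
    and xstar :: 'a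
    and p L \<epsilon>3 \<alpha> \<gamma> Lbar c :: real
    and x0 u0 :: 'a
    and x om u y xbar :: "nat \<Rightarrow> 'w \<Rightarrow> 'a"
    and \<xi> :: "nat \<Rightarrow> 'w \<Rightarrow> nat" and coin :: "nat \<Rightarrow> 'w \<Rightarrow> bool"
  assumes Pr: "prob_space Pr"
    \<comment> \<open>(A2): metric S\<close>
    and S: "strongly_pos_sa S"
    \<comment> \<open>(A2)(i)\<close>
    and A: "maximal_monotone A"
    \<comment> \<open>(A2)(ii)\<close>
    and Bi: "\<And>i. i \<in> {1..N} \<Longrightarrow> monotone_op (Bi i) \<and> lipschitz_op (Bi i)"
    and B_def: "\<And>z. B z = (\<Sum>i\<in>{1..N}. Bi i z)"
    and Q_supp: "set_pmf Q \<subseteq> {1..N}"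
    and oracle_unbiased: "\<And>z. measure_pmf.expectation Q (\<lambda>i. Bxi i z) = B z"
    and oracle_var: "\<And>z v. measure_pmf.expectation Q (\<lambda>i. (norm_S (inv S) (Bxi i z - Bxi i v))\<^sup>2)
                        \<le> \<theta>\<^sup>2 * (norm_S S (z - v))\<^sup>2"
    and \<theta>_pos: "\<theta> > 0"
    \<comment> \<open>(A2)(iii)\<close>
    and \<beta>_pos: "\<beta> > 0"
    and C: "cocoercive_wrt S \<beta> C"
    \<comment> \<open>strong monotonicity of B; x* the solution (A2)(iv)\<close>
    and \<mu>_pos: "\<mu> > 0"
    and B_strong: "strongly_monotone_wrt S \<mu> B"
    and xstar: "- (B xstar + C xstar) \<in> A xstar"
    \<comment> \<open>parameters\<close>
    and p: "0 < p" "p < 1"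
    and L: "L \<ge> (3 - p) / 2"
    and \<epsilon>3: "\<epsilon>3 > 0"
    and \<alpha>: "\<alpha> > 0"
    and Lk_nonneg: "\<And>k. 0 \<le> Lk k"
    and Lk_lt1: "\<And>k. Lk k < 1"
    and Lk_alpha: "\<And>k. Lk k + \<alpha> \<le> (1 - sqrt p) / 4"
    and Lbar: "Lbar = Sup (range Lk)"
    and \<gamma>_def: "\<gamma> = (if Lbar = 0 then min (sqrt p / (2 * \<theta>)) (p / \<beta>)
                   else min (min (sqrt p / (2 * \<theta>)) (p / \<beta>)) (\<alpha> / (Lbar * \<theta>)))"
    \<comment> \<open>(A2)(v)\<close>
    and Mk: "\<And>k. lipschitz_wrt S (Lk k) (\<lambda>v. \<gamma> *\<^sub>R Mk k v - S v)"
    \<comment> \<open>0 \<le> c \<le> c_k for all k \<ge> 1\<close>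
    and c_nonneg: "0 \<le> c"
    and c_le1: "\<And>k. k \<ge> 1 \<Longrightarrow> c \<le> \<gamma> * \<mu> / (1 + Lk k / (2 * L * \<epsilon>3))"
    and c_le2: "\<And>k. k \<ge> 1 \<Longrightarrow> Lk k \<noteq> 0 \<Longrightarrow>
        c \<le> 2 * L * (1 - p - Lk (k - 1) - \<alpha> - (1 - p) * (\<alpha> + Lk k)) / ((1 - p) * Lk k * (\<epsilon>3 + 1))"
    and c_le3: "\<And>k. k \<ge> 1 \<Longrightarrow>
        c \<le> L * p * (1 - sqrt p - 4 * (Lk k + \<alpha>)) / (2 * (1 - p) * (4 + p) + 2 * p * Lk k * (\<epsilon>3 + 1))"
    \<comment> \<open>random draws: (xi_k, coin_k) ~ Q x Bernoulli(p), independent over k\<close>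
    and draws_indep: "prob_space.indep_vars Pr (\<lambda>_. count_space UNIV) (\<lambda>k w. (\<xi> k w, coin k w)) UNIV"
    and draws_distr: "\<And>k. distr Pr (count_space UNIV) (\<lambda>w. (\<xi> k w, coin k w))
                          = measure_pmf (pair_pmf Q (bernoulli_pmf p))"
    \<comment> \<open>Algorithm SVR-NFBHF-M with lambda = 1 - p\<close>
    and init_x: "\<And>w. w \<in> space Pr \<Longrightarrow> x 0 w = x0"
    and init_u: "\<And>w. w \<in> space Pr \<Longrightarrow> u 0 w = u0"
    and init_om: "\<And>w. w \<in> space Pr \<Longrightarrow> om 0 w = x0"
    and step_xbar: "\<And>k w. w \<in> space Pr \<Longrightarrow> xbar k w = (1 - p) *\<^sub>R x k w + (1 - (1 - p)) *\<^sub>R om k w"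
    and step_y: "\<And>k w. w \<in> space Pr \<Longrightarrow>
        (Mk k (xbar k w) - (B (om k w) + C (om k w)) + (1 / \<gamma>) *\<^sub>R u k w) - Mk k (y k w) \<in> A (y k w)"
    and step_u: "\<And>k w. w \<in> space Pr \<Longrightarrow>
        u (Suc k) w = (\<gamma> *\<^sub>R Mk k (y k w) - S (y k w)) - (\<gamma> *\<^sub>R Mk k (xbar k w) - S (xbar k w))"
    and step_x: "\<And>k w. w \<in> space Pr \<Longrightarrow>
        x (Suc k) w = y k w - \<gamma> *\<^sub>R inv S (Bxi (\<xi> k w) (y k w)) + \<gamma> *\<^sub>R inv S (Bxi (\<xi> k w) (om k w))"
    and step_om: "\<And>k w. w \<in> space Pr \<Longrightarrow> om (Suc k) w = (if coin k w then x (Suc k) w else om k w)"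
  shows "\<forall>k\<ge>1. (1 - p - Lk k) * prob_space.expectation Pr (\<lambda>w. (norm_S S (x (Suc k) w - xstar))\<^sup>2)
           \<le> prob_space.expectation Pr (\<lambda>w. (1 - p) * (norm_S S (x 1 w - xstar))\<^sup>2
                  + (norm_S S (om 1 w - xstar))\<^sup>2
                  + (2 * inner (u 1 w) (x 1 w - xstar) + Lk 0 * (norm_S S (y 0 w - xbar 0 w))\<^sup>2))
             / (1 + c / (2 * L)) ^ k"
proof -
  \<comment> \<open>The argument does not use \<open>Bi\<close>, \<open>B_def\<close>, \<open>\<mu>_pos\<close> or the middle bound \<open>c_le2\<close>.\<close>
  have \<gamma>: "0 < \<gamma>" "\<gamma> * \<theta> \<le> sqrt p / 2" "\<gamma> * \<beta> \<le> p"
    by (rule step_size_bounds[OF p(1) \<theta>_pos \<beta>_pos \<alpha> Lk_nonneg Lk_lt1 Lbar \<gamma>_def])+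
  have finite_Q: "finite (set_pmf Q)" using Q_supp by (rule finite_subset) simp
  have A_monotone: "monotone_setop A" using A unfolding maximal_monotone_def by blast
  have \<theta>: "0 \<le> \<theta>" and r: "0 \<le> c / (2 * L)" using \<theta>_pos c_nonneg L p by auto
  have Lk_small: "Lk k \<le> (1 - sqrt p) / 4" for k using Lk_alpha[of k] \<alpha> by simp
  note rate_strong_monotone = rate_bound_strong_monotone[OF L p(2) \<epsilon>3 Lk_nonneg c_nonneg c_le1]
  note rate_margin = rate_bound_margin[OF L p \<epsilon>3 \<alpha> Lk_nonneg c_le3]
  interpret svr_nfbhf_m_contraction Pr S A B C Q Bxi \<theta> \<beta> \<mu> xstar Mk Lk \<gamma> p x0 u0
      x om u y xbar \<xi> coin "c / (2 * L)" \<epsilon>3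
    by (intro svr_nfbhf_m_contraction.intro svr_nfbhf_m.intro svr_nfbhf_m_axioms.intro
        svr_nfbhf_m_contraction_axioms.intro strongly_positive.intro)
      (fact Pr S A_monotone finite_Q oracle_unbiased oracle_var \<theta> \<beta>_pos C B_strong xstar p \<gamma>
        Lk_nonneg Lk_lt1 Mk draws_indep draws_distr init_x init_u init_om step_xbar step_y step_u
        step_x step_om r \<epsilon>3 Lk_small rate_strong_monotone rate_margin)+
  show ?thesis using expected_distance_decay unfolding lyapunov_def by simp
qed

end
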